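(* Let $\mathcal A,\mathcal B,\mathcal C$ be abelian categories and let $(\mathcal B,\mathcal A,\mathcal C, i^*, i_*, i^!, j_!, j^*, j_* )$ be a recollement of abelian categories, where $i^*,i^!:\mathcal A\to\mathcal B$, $i_*:\mathcal B\to\mathcal A$, $j^*:\mathcal A\to\mathcal C$ and $j_!,j_*:\mathcal C\to\mathcal A$. If $i^*$ and $i^!$ are exact functors, then $i^*\cong i^!$, $j_!\cong j_*$, and $\mathcal A\cong\mathcal B\oplus\mathcal C$ as categories.
   Context: A recollement $(\mathcal B,\mathcal A,\mathcal C, i^*, i_*, i^!, j_!, j^*, j_* )$ of abelian categories consists of functors $i^*,i^!:\mathcal A\to\mathcal B$, $i_*:\mathcal B\to\mathcal A$, $j^*:\mathcal A\to\mathcal C$, $j_!,j_*:\mathcal C\to\mathcal A$ such that: (i) $(i^*,i_* )$, $(i_*,i^!)$, $(j_!,j^* )$, $(j^*,j_* )$ are adjoint pairs (left adjoint written first); (ii) $i_*$, $j_!$, $j_*$ are fully faithful; (iii) $\mathrm{Im}\, i_*=\mathrm{Ker}\, j^*$, where $\mathrm{Im}\, i_*$ is the full subcategory of objects isomorphic to some $i_*B$ and $\mathrm{Ker}\, j^*$ is the full subcategory of objects $A$ with $j^*A=0$. *)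

theory Defs
  imports Main
begin

record ('o,'a) category =
  cat_ob   :: "'o set"
  cat_hom  :: "'o \<Rightarrow> 'o \<Rightarrow> 'a set"
  cat_comp :: "'a \<Rightarrow> 'a \<Rightarrow> 'a"   (* cat_comp C g f  =  g o f *)
  cat_id   :: "'o \<Rightarrow> 'a"

definition is_category :: "('o,'a) category \<Rightarrow> bool" where
  "is_category C \<longleftrightarrow>
     (\<forall>X Y. (X \<notin> cat_ob C \<or> Y \<notin> cat_ob C) \<longrightarrow> cat_hom C X Y = {}) \<and>
     (\<forall>X Y X' Y'. cat_hom C X Y \<inter> cat_hom C X' Y' \<noteq> {} \<longrightarrow> X = X' \<and> Y = Y') \<and>
     (\<forall>X \<in> cat_ob C. cat_id C X \<in> cat_hom C X X) \<and>
     (\<forall>X Y Z f g. f \<in> cat_hom C X Y \<longrightarrow> g \<in> cat_hom C Y Z \<longrightarrow>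
        cat_comp C g f \<in> cat_hom C X Z) \<and>
     (\<forall>X Y f. f \<in> cat_hom C X Y \<longrightarrow>
        cat_comp C (cat_id C Y) f = f \<and> cat_comp C f (cat_id C X) = f) \<and>
     (\<forall>W X Y Z f g h. f \<in> cat_hom C W X \<longrightarrow> g \<in> cat_hom C X Y \<longrightarrow> h \<in> cat_hom C Y Z \<longrightarrow>
        cat_comp C h (cat_comp C g f) = cat_comp C (cat_comp C h g) f)"

definition is_iso :: "('o,'a) category \<Rightarrow> 'o \<Rightarrow> 'o \<Rightarrow> 'a \<Rightarrow> bool" where
  "is_iso C X Y f \<longleftrightarrow> f \<in> cat_hom C X Y \<and>
     (\<exists>g \<in> cat_hom C Y X. cat_comp C g f = cat_id C X \<and> cat_comp C f g = cat_id C Y)"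

definition isomorphic_ob :: "('o,'a) category \<Rightarrow> 'o \<Rightarrow> 'o \<Rightarrow> bool" where
  "isomorphic_ob C X Y \<longleftrightarrow> (\<exists>f. is_iso C X Y f)"

definition zero_ob :: "('o,'a) category \<Rightarrow> 'o \<Rightarrow> bool" where
  "zero_ob C Z \<longleftrightarrow> Z \<in> cat_ob C \<and>
     (\<forall>X \<in> cat_ob C. (\<exists>!f. f \<in> cat_hom C Z X) \<and> (\<exists>!f. f \<in> cat_hom C X Z))"

definition zero_arr :: "('o,'a) category \<Rightarrow> 'o \<Rightarrow> 'o \<Rightarrow> 'a \<Rightarrow> bool" where
  "zero_arr C X Y f \<longleftrightarrow> f \<in> cat_hom C X Y \<and>
     (\<exists>Z g h. zero_ob C Z \<and> g \<in> cat_hom C X Z \<and> h \<in> cat_hom C Z Y \<and> f = cat_comp C h g)"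

definition is_mono :: "('o,'a) category \<Rightarrow> 'o \<Rightarrow> 'o \<Rightarrow> 'a \<Rightarrow> bool" where
  "is_mono C X Y f \<longleftrightarrow> f \<in> cat_hom C X Y \<and>
     (\<forall>W g h. g \<in> cat_hom C W X \<longrightarrow> h \<in> cat_hom C W X \<longrightarrow>
        cat_comp C f g = cat_comp C f h \<longrightarrow> g = h)"

definition is_epi :: "('o,'a) category \<Rightarrow> 'o \<Rightarrow> 'o \<Rightarrow> 'a \<Rightarrow> bool" where
  "is_epi C X Y f \<longleftrightarrow> f \<in> cat_hom C X Y \<and>
     (\<forall>W g h. g \<in> cat_hom C Y W \<longrightarrow> h \<in> cat_hom C Y W \<longrightarrow>
        cat_comp C g f = cat_comp C h f \<longrightarrow> g = h)"

definition is_kernel :: "('o,'a) category \<Rightarrow> 'o \<Rightarrow> 'o \<Rightarrow> 'a \<Rightarrow> 'o \<Rightarrow> 'a \<Rightarrow> bool" where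
  "is_kernel C X Y f K k \<longleftrightarrow> f \<in> cat_hom C X Y \<and> k \<in> cat_hom C K X \<and>
     zero_arr C K Y (cat_comp C f k) \<and>
     (\<forall>W g. g \<in> cat_hom C W X \<longrightarrow> zero_arr C W Y (cat_comp C f g) \<longrightarrow>
        (\<exists>!u. u \<in> cat_hom C W K \<and> cat_comp C k u = g))"

definition is_cokernel :: "('o,'a) category \<Rightarrow> 'o \<Rightarrow> 'o \<Rightarrow> 'a \<Rightarrow> 'o \<Rightarrow> 'a \<Rightarrow> bool" where
  "is_cokernel C X Y f Q q \<longleftrightarrow> f \<in> cat_hom C X Y \<and> q \<in> cat_hom C Y Q \<and>
     zero_arr C X Q (cat_comp C q f) \<and>
     (\<forall>W g. g \<in> cat_hom C Y W \<longrightarrow> zero_arr C X W (cat_comp C g f) \<longrightarrow>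
        (\<exists>!u. u \<in> cat_hom C Q W \<and> cat_comp C u q = g))"

definition is_product :: "('o,'a) category \<Rightarrow> 'o \<Rightarrow> 'o \<Rightarrow> 'o \<Rightarrow> 'a \<Rightarrow> 'a \<Rightarrow> bool" where
  "is_product C X Y P p1 p2 \<longleftrightarrow> P \<in> cat_ob C \<and> p1 \<in> cat_hom C P X \<and> p2 \<in> cat_hom C P Y \<and>
     (\<forall>W f g. f \<in> cat_hom C W X \<longrightarrow> g \<in> cat_hom C W Y \<longrightarrow>
        (\<exists>!u. u \<in> cat_hom C W P \<and> cat_comp C p1 u = f \<and> cat_comp C p2 u = g))"

definition is_coproduct :: "('o,'a) category \<Rightarrow> 'o \<Rightarrow> 'o \<Rightarrow> 'o \<Rightarrow> 'a \<Rightarrow> 'a \<Rightarrow> bool" where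
  "is_coproduct C X Y S i1 i2 \<longleftrightarrow> S \<in> cat_ob C \<and> i1 \<in> cat_hom C X S \<and> i2 \<in> cat_hom C Y S \<and>
     (\<forall>W f g. f \<in> cat_hom C X W \<longrightarrow> g \<in> cat_hom C Y W \<longrightarrow>
        (\<exists>!u. u \<in> cat_hom C S W \<and> cat_comp C u i1 = f \<and> cat_comp C u i2 = g))"

text \<open>Abelian category (Freyd's intrinsic definition): zero object, binary products and
  coproducts, kernels and cokernels, every mono is a kernel and every epi is a cokernel.
  (The additive structure is then unique and determined.)\<close>
definition abelian :: "('o,'a) category \<Rightarrow> bool" where
  "abelian C \<longleftrightarrow> is_category C \<and>
     (\<exists>Z. zero_ob C Z) \<and>
     (\<forall>X \<in> cat_ob C. \<forall>Y \<in> cat_ob C. \<exists>P p1 p2. is_product C X Y P p1 p2) \<and>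
     (\<forall>X \<in> cat_ob C. \<forall>Y \<in> cat_ob C. \<exists>S i1 i2. is_coproduct C X Y S i1 i2) \<and>
     (\<forall>X Y f. f \<in> cat_hom C X Y \<longrightarrow> (\<exists>K k. is_kernel C X Y f K k)) \<and>
     (\<forall>X Y f. f \<in> cat_hom C X Y \<longrightarrow> (\<exists>Q q. is_cokernel C X Y f Q q)) \<and>
     (\<forall>K X k. is_mono C K X k \<longrightarrow> (\<exists>Y f. is_kernel C X Y f K k)) \<and>
     (\<forall>Y Q q. is_epi C Y Q q \<longrightarrow> (\<exists>X f. is_cokernel C X Y f Q q))"

record ('o1,'a1,'o2,'a2) cfunctor =
  fob  :: "'o1 \<Rightarrow> 'o2"
  farr :: "'a1 \<Rightarrow> 'a2"

definition is_functor ::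
  "('o1,'a1) category \<Rightarrow> ('o2,'a2) category \<Rightarrow> ('o1,'a1,'o2,'a2) cfunctor \<Rightarrow> bool" where
  "is_functor C D F \<longleftrightarrow>
     (\<forall>X \<in> cat_ob C. fob F X \<in> cat_ob D) \<and>
     (\<forall>X Y f. f \<in> cat_hom C X Y \<longrightarrow> farr F f \<in> cat_hom D (fob F X) (fob F Y)) \<and>
     (\<forall>X \<in> cat_ob C. farr F (cat_id C X) = cat_id D (fob F X)) \<and>
     (\<forall>X Y Z f g. f \<in> cat_hom C X Y \<longrightarrow> g \<in> cat_hom C Y Z \<longrightarrow>
        farr F (cat_comp C g f) = cat_comp D (farr F g) (farr F f))"

definition id_functor :: "('o,'a) category \<Rightarrow> ('o,'a,'o,'a) cfunctor" where
  "id_functor C = \<lparr>fob = (\<lambda>X. X), farr = (\<lambda>f. f)\<rparr>"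

definition fcomp :: "('o2,'a2,'o3,'a3) cfunctor \<Rightarrow> ('o1,'a1,'o2,'a2) cfunctor \<Rightarrow> ('o1,'a1,'o3,'a3) cfunctor" where
  "fcomp G F = \<lparr>fob = fob G \<circ> fob F, farr = farr G \<circ> farr F\<rparr>"

definition nat_trans ::
  "('o1,'a1) category \<Rightarrow> ('o2,'a2) category \<Rightarrow> ('o1,'a1,'o2,'a2) cfunctor \<Rightarrow>
   ('o1,'a1,'o2,'a2) cfunctor \<Rightarrow> ('o1 \<Rightarrow> 'a2) \<Rightarrow> bool" where
  "nat_trans C D F G \<eta> \<longleftrightarrow> is_functor C D F \<and> is_functor C D G \<and>
     (\<forall>X \<in> cat_ob C. \<eta> X \<in> cat_hom D (fob F X) (fob G X)) \<and>
     (\<forall>X Y f. f \<in> cat_hom C X Y \<longrightarrow>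
        cat_comp D (farr G f) (\<eta> X) = cat_comp D (\<eta> Y) (farr F f))"

definition nat_iso ::
  "('o1,'a1) category \<Rightarrow> ('o2,'a2) category \<Rightarrow> ('o1,'a1,'o2,'a2) cfunctor \<Rightarrow>
   ('o1,'a1,'o2,'a2) cfunctor \<Rightarrow> ('o1 \<Rightarrow> 'a2) \<Rightarrow> bool" where
  "nat_iso C D F G \<eta> \<longleftrightarrow> nat_trans C D F G \<eta> \<and>
     (\<forall>X \<in> cat_ob C. is_iso D (fob F X) (fob G X) (\<eta> X))"

definition nat_isomorphic ::
  "('o1,'a1) category \<Rightarrow> ('o2,'a2) category \<Rightarrow> ('o1,'a1,'o2,'a2) cfunctor \<Rightarrow>
   ('o1,'a1,'o2,'a2) cfunctor \<Rightarrow> bool" where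
  "nat_isomorphic C D F G \<longleftrightarrow> (\<exists>\<eta>. nat_iso C D F G \<eta>)"

definition adjoint ::
  "('o1,'a1) category \<Rightarrow> ('o2,'a2) category \<Rightarrow> ('o1,'a1,'o2,'a2) cfunctor \<Rightarrow>
   ('o2,'a2,'o1,'a1) cfunctor \<Rightarrow> bool" where
  "adjoint C D F G \<longleftrightarrow> is_functor C D F \<and> is_functor D C G \<and>
     (\<exists>\<eta> \<epsilon>. nat_trans C C (id_functor C) (fcomp G F) \<eta> \<and>
            nat_trans D D (fcomp F G) (id_functor D) \<epsilon> \<and>
            (\<forall>X \<in> cat_ob C. cat_comp D (\<epsilon> (fob F X)) (farr F (\<eta> X)) = cat_id D (fob F X)) \<and>
            (\<forall>Y \<in> cat_ob D. cat_comp C (farr G (\<epsilon> Y)) (\<eta> (fob G Y)) = cat_id C (fob G Y)))"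

definition fully_faithful ::
  "('o1,'a1) category \<Rightarrow> ('o2,'a2) category \<Rightarrow> ('o1,'a1,'o2,'a2) cfunctor \<Rightarrow> bool" where
  "fully_faithful C D F \<longleftrightarrow> is_functor C D F \<and>
     (\<forall>X \<in> cat_ob C. \<forall>Y \<in> cat_ob C.
        bij_betw (farr F) (cat_hom C X Y) (cat_hom D (fob F X) (fob F Y)))"

definition short_exact ::
  "('o,'a) category \<Rightarrow> 'o \<Rightarrow> 'o \<Rightarrow> 'o \<Rightarrow> 'a \<Rightarrow> 'a \<Rightarrow> bool" where
  "short_exact C X Y Z f g \<longleftrightarrow> is_kernel C Y Z g X f \<and> is_cokernel C X Y f Z g"

definition exact_functor ::
  "('o1,'a1) category \<Rightarrow> ('o2,'a2) category \<Rightarrow> ('o1,'a1,'o2,'a2) cfunctor \<Rightarrow> bool" where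
  "exact_functor C D F \<longleftrightarrow> is_functor C D F \<and>
     (\<forall>X Y Z f g. short_exact C X Y Z f g \<longrightarrow>
        short_exact D (fob F X) (fob F Y) (fob F Z) (farr F f) (farr F g))"

definition recollement ::
  "('ob,'ab) category \<Rightarrow> ('oa,'aa) category \<Rightarrow> ('oc,'ac) category \<Rightarrow>
   ('oa,'aa,'ob,'ab) cfunctor \<Rightarrow> ('ob,'ab,'oa,'aa) cfunctor \<Rightarrow> ('oa,'aa,'ob,'ab) cfunctor \<Rightarrow>
   ('oc,'ac,'oa,'aa) cfunctor \<Rightarrow> ('oa,'aa,'oc,'ac) cfunctor \<Rightarrow> ('oc,'ac,'oa,'aa) cfunctor \<Rightarrow> bool" where
  "recollement \<B> \<A> \<C> i_up_star i_low_star i_up_shriek j_low_shriek j_up_star j_low_star \<longleftrightarrow>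
     abelian \<A> \<and> abelian \<B> \<and> abelian \<C> \<and>
     adjoint \<A> \<B> i_up_star i_low_star \<and>
     adjoint \<B> \<A> i_low_star i_up_shriek \<and>
     adjoint \<C> \<A> j_low_shriek j_up_star \<and>
     adjoint \<A> \<C> j_up_star j_low_star \<and>
     fully_faithful \<B> \<A> i_low_star \<and>
     fully_faithful \<C> \<A> j_low_shriek \<and>
     fully_faithful \<C> \<A> j_low_star \<and>
     (\<forall>X \<in> cat_ob \<A>. (\<exists>Y \<in> cat_ob \<B>. isomorphic_ob \<A> X (fob i_low_star Y)) \<longleftrightarrow>
                      zero_ob \<C> (fob j_up_star X))"

definition prod_cat :: "('o1,'a1) category \<Rightarrow> ('o2,'a2) category \<Rightarrow> ('o1 \<times> 'o2, 'a1 \<times> 'a2) category" where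
  "prod_cat B C = \<lparr>cat_ob = cat_ob B \<times> cat_ob C,
     cat_hom = (\<lambda>(X,X') (Y,Y'). cat_hom B X Y \<times> cat_hom C X' Y'),
     cat_comp = (\<lambda>(g,g') (f,f'). (cat_comp B g f, cat_comp C g' f')),
     cat_id = (\<lambda>(X,X'). (cat_id B X, cat_id C X'))\<rparr>"

definition equivalent_cat :: "('o1,'a1) category \<Rightarrow> ('o2,'a2) category \<Rightarrow> bool" where
  "equivalent_cat C D \<longleftrightarrow> (\<exists>F G. is_functor C D F \<and> is_functor D C G \<and>
      nat_isomorphic C C (fcomp G F) (id_functor C) \<and>
      nat_isomorphic D D (fcomp F G) (id_functor D))"

end

theory Submission
  imports Defs
begin

text \<open>
  Write \<open>\<alpha>\<close> for the counit \<open>i\<^sub>* i\<^sup>! \<rightarrow> 1\<close> and \<open>\<epsilon>\<close> for the counit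
  \<open>j\<^sub>! j\<^sup>* \<rightarrow> 1\<close>. The key fact is that an arrow out of \<open>X\<close> vanishing on both
  \<open>\<alpha>\<^sub>X\<close> and \<open>\<epsilon>\<^sub>X\<close> is zero: it factors through the cokernel \<open>c : X \<rightarrow> Q\<close> of
  \<open>\<epsilon>\<^sub>X\<close>; then \<open>j\<^sup>* Q = 0\<close>, so \<open>Q\<close> lies in the image of \<open>i\<^sub>*\<close> and \<open>\<alpha>\<^sub>Q\<close> is
  invertible, and since \<open>i\<^sup>!\<close> is exact, \<open>c \<circ> \<alpha>\<^sub>X = \<alpha>\<^sub>Q \<circ> i\<^sub>* i\<^sup>! c\<close> is epi.
  This yields \<open>i\<^sup>* j\<^sub>* = 0\<close>, and with the exactness of \<open>i\<^sup>*\<close> and \<open>i\<^sup>!\<close> it follows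
  that \<open>i\<^sup>* \<alpha>\<^sub>X\<close> is invertible, whence \<open>i\<^sup>! \<cong> i\<^sup>* i\<^sub>* i\<^sup>! \<cong> i\<^sup>*\<close>.
  Consequently \<open>(i\<^sup>*, j\<^sup>*)\<close> is faithful, every \<open>X\<close> is the coproduct of \<open>i\<^sub>* i\<^sup>! X\<close> and
  \<open>j\<^sub>! j\<^sup>* X\<close> via \<open>\<alpha>\<^sub>X\<close> and \<open>\<epsilon>\<^sub>X\<close>, and \<open>(i\<^sup>*, j\<^sup>*) : \<A> \<rightarrow> \<B> \<times> \<C>\<close> is fully
  faithful and essentially surjective, hence an equivalence. Finally \<open>j\<^sub>! \<cong> j\<^sub>*\<close>: the
  canonical map \<open>j\<^sub>! \<rightarrow> j\<^sub>* j\<^sup>* j\<^sub>! \<cong> j\<^sub>*\<close> is inverted by \<open>j\<^sup>*\<close>, and \<open>i\<^sup>*\<close> kills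
  both ends, so it is inverted by the equivalence \<open>(i\<^sup>*, j\<^sup>*)\<close>.
\<close>

lemma ex1_unique: "\<exists>!x. P x \<Longrightarrow> P a \<Longrightarrow> P b \<Longrightarrow> a = b"
  by blast

locale cat =
  fixes C :: "('o,'a) category"
  assumes is_cat: "is_category C"
begin

lemma hom_obs: "f \<in> cat_hom C X Y \<Longrightarrow> X \<in> cat_ob C \<and> Y \<in> cat_ob C"
  using is_cat[unfolded is_category_def, THEN conjunct1] by blast

lemma hom_dom_ob: "f \<in> cat_hom C X Y \<Longrightarrow> X \<in> cat_ob C"
  using hom_obs by blast

lemma hom_cod_ob: "f \<in> cat_hom C X Y \<Longrightarrow> Y \<in> cat_ob C"
  using hom_obs by blast

lemma hom_obs_unique: "f \<in> cat_hom C X Y \<Longrightarrow> f \<in> cat_hom C X' Y' \<Longrightarrow> X = X' \<and> Y = Y'"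
  using is_cat[unfolded is_category_def, THEN conjunct2, THEN conjunct1] by blast

lemma id_hom[intro]: "X \<in> cat_ob C \<Longrightarrow> cat_id C X \<in> cat_hom C X X"
  using is_cat unfolding is_category_def by blast

lemma comp_hom[intro]: "f \<in> cat_hom C X Y \<Longrightarrow> g \<in> cat_hom C Y Z \<Longrightarrow> cat_comp C g f \<in> cat_hom C X Z"
  using is_cat unfolding is_category_def by blast

lemma id_left[simp]: "f \<in> cat_hom C X Y \<Longrightarrow> cat_comp C (cat_id C Y) f = f"
  using is_cat unfolding is_category_def by blast

lemma id_right[simp]: "f \<in> cat_hom C X Y \<Longrightarrow> cat_comp C f (cat_id C X) = f"
  using is_cat unfolding is_category_def by blast

lemma assoc: "f \<in> cat_hom C W X \<Longrightarrow> g \<in> cat_hom C X Y \<Longrightarrow> h \<in> cat_hom C Y Z \<Longrightarrow>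
    cat_comp C h (cat_comp C g f) = cat_comp C (cat_comp C h g) f"
  using is_cat unfolding is_category_def by blast

definition arr_dom :: "'a \<Rightarrow> 'o" where
  "arr_dom f = (SOME X. \<exists>Y. f \<in> cat_hom C X Y)"

definition arr_cod :: "'a \<Rightarrow> 'o" where
  "arr_cod f = (SOME Y. \<exists>X. f \<in> cat_hom C X Y)"

lemma arr_dom_cod: assumes f: "f \<in> cat_hom C X Y" shows "arr_dom f = X" "arr_cod f = Y"
proof -
  have "\<exists>Y. f \<in> cat_hom C (arr_dom f) Y" "\<exists>X. f \<in> cat_hom C X (arr_cod f)"
    unfolding arr_dom_def arr_cod_def by (rule someI_ex, use f in blast)+
  then show "arr_dom f = X" "arr_cod f = Y" using hom_obs_unique f by blast+
qed

lemma iso_hom: "is_iso C X Y f \<Longrightarrow> f \<in> cat_hom C X Y"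
  unfolding is_iso_def by blast

lemma isoI: "f \<in> cat_hom C X Y \<Longrightarrow> g \<in> cat_hom C Y X \<Longrightarrow>
    cat_comp C g f = cat_id C X \<Longrightarrow> cat_comp C f g = cat_id C Y \<Longrightarrow> is_iso C X Y f"
  unfolding is_iso_def by blast

lemma iso_id: "X \<in> cat_ob C \<Longrightarrow> is_iso C X X (cat_id C X)"
  using isoI[OF id_hom id_hom] id_left[OF id_hom] by blast

lemma iso_comp: assumes f: "is_iso C X Y f" and g: "is_iso C Y Z g"
  shows "is_iso C X Z (cat_comp C g f)"
proof -
  obtain f' where f': "f' \<in> cat_hom C Y X" "cat_comp C f' f = cat_id C X" "cat_comp C f f' = cat_id C Y"
    and fh: "f \<in> cat_hom C X Y" using f unfolding is_iso_def by blast
  obtain g' where g': "g' \<in> cat_hom C Z Y" "cat_comp C g' g = cat_id C Y" "cat_comp C g g' = cat_id C Z"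
    and gh: "g \<in> cat_hom C Y Z" using g unfolding is_iso_def by blast
  have "cat_comp C (cat_comp C f' g') (cat_comp C g f) = cat_comp C f' (cat_comp C (cat_comp C g' g) f)"
    using assoc[OF comp_hom[OF fh gh] g'(1) f'(1)] assoc[OF fh gh g'(1)] by simp
  also have "\<dots> = cat_id C X" using f' g' fh by simp
  finally have 1: "cat_comp C (cat_comp C f' g') (cat_comp C g f) = cat_id C X" .
  have "cat_comp C (cat_comp C g f) (cat_comp C f' g') = cat_comp C g (cat_comp C (cat_comp C f f') g')"
    using assoc[OF comp_hom[OF g'(1) f'(1)] fh gh] assoc[OF g'(1) f'(1) fh] by simp
  also have "\<dots> = cat_id C Z" using f' g' by simp
  finally have 2: "cat_comp C (cat_comp C g f) (cat_comp C f' g') = cat_id C Z" .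
  show ?thesis using isoI[OF comp_hom[OF fh gh] comp_hom[OF g'(1) f'(1)] 1 2] .
qed

definition inv_arr :: "'o \<Rightarrow> 'o \<Rightarrow> 'a \<Rightarrow> 'a" where
  "inv_arr X Y f = (SOME g. is_iso C Y X g \<and> cat_comp C g f = cat_id C X \<and> cat_comp C f g = cat_id C Y)"

lemma inv_arr: assumes "is_iso C X Y f"
  shows "is_iso C Y X (inv_arr X Y f)" "cat_comp C (inv_arr X Y f) f = cat_id C X"
    "cat_comp C f (inv_arr X Y f) = cat_id C Y" "inv_arr X Y f \<in> cat_hom C Y X"
proof -
  have "\<exists>g. is_iso C Y X g \<and> cat_comp C g f = cat_id C X \<and> cat_comp C f g = cat_id C Y"
    using assms unfolding is_iso_def by blast
  then have "is_iso C Y X (inv_arr X Y f) \<and> cat_comp C (inv_arr X Y f) f = cat_id C X \<and>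
      cat_comp C f (inv_arr X Y f) = cat_id C Y"
    unfolding inv_arr_def by (rule someI_ex)
  then show "is_iso C Y X (inv_arr X Y f)" "cat_comp C (inv_arr X Y f) f = cat_id C X"
    "cat_comp C f (inv_arr X Y f) = cat_id C Y" "inv_arr X Y f \<in> cat_hom C Y X"
    using iso_hom by auto
qed

lemma mono_hom: "is_mono C X Y f \<Longrightarrow> f \<in> cat_hom C X Y"
  unfolding is_mono_def by blast

lemma epi_hom: "is_epi C X Y f \<Longrightarrow> f \<in> cat_hom C X Y"
  unfolding is_epi_def by blast

lemma mono_cancel: "is_mono C X Y f \<Longrightarrow> g \<in> cat_hom C W X \<Longrightarrow> h \<in> cat_hom C W X \<Longrightarrow>
    cat_comp C f g = cat_comp C f h \<Longrightarrow> g = h"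
  unfolding is_mono_def by blast

lemma epi_cancel: "is_epi C X Y f \<Longrightarrow> g \<in> cat_hom C Y W \<Longrightarrow> h \<in> cat_hom C Y W \<Longrightarrow>
    cat_comp C g f = cat_comp C h f \<Longrightarrow> g = h"
  unfolding is_epi_def by blast

lemma split_mono: assumes f: "f \<in> cat_hom C X Y" and r: "r \<in> cat_hom C Y X"
  and rf: "cat_comp C r f = cat_id C X" shows "is_mono C X Y f"
  unfolding is_mono_def
proof (intro conjI allI impI f)
  fix W g h assume g: "g \<in> cat_hom C W X" and h: "h \<in> cat_hom C W X"
    and e: "cat_comp C f g = cat_comp C f h"
  have "g = cat_comp C (cat_comp C r f) g" using rf g by simp
  also have "\<dots> = cat_comp C (cat_comp C r f) h" using e assoc[OF g f r] assoc[OF h f r] by simp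
  also have "\<dots> = h" using rf h by simp
  finally show "g = h" .
qed

lemma split_epi: assumes f: "f \<in> cat_hom C X Y" and s: "s \<in> cat_hom C Y X"
  and fs: "cat_comp C f s = cat_id C Y" shows "is_epi C X Y f"
  unfolding is_epi_def
proof (intro conjI allI impI f)
  fix W g h assume g: "g \<in> cat_hom C Y W" and h: "h \<in> cat_hom C Y W"
    and e: "cat_comp C g f = cat_comp C h f"
  have "g = cat_comp C g (cat_comp C f s)" using fs g by simp
  also have "\<dots> = cat_comp C h (cat_comp C f s)" using e assoc[OF s f g] assoc[OF s f h] by simp
  also have "\<dots> = h" using fs h by simp
  finally show "g = h" .
qed

lemma iso_mono: assumes "is_iso C X Y f" shows "is_mono C X Y f"
  by (rule split_mono[OF iso_hom[OF assms] inv_arr(4,2)[OF assms]])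

lemma iso_epi: assumes "is_iso C X Y f" shows "is_epi C X Y f"
  by (rule split_epi[OF iso_hom[OF assms] inv_arr(4,3)[OF assms]])

lemma epi_comp: assumes f: "is_epi C X Y f" and g: "is_epi C Y Z g"
  shows "is_epi C X Z (cat_comp C g f)"
  unfolding is_epi_def
proof (intro conjI allI impI)
  show "cat_comp C g f \<in> cat_hom C X Z" using f g epi_hom by blast
  fix W a b assume a: "a \<in> cat_hom C Z W" and b: "b \<in> cat_hom C Z W"
    and e: "cat_comp C a (cat_comp C g f) = cat_comp C b (cat_comp C g f)"
  have "cat_comp C (cat_comp C a g) f = cat_comp C (cat_comp C b g) f"
    using e assoc[OF epi_hom[OF f] epi_hom[OF g] a] assoc[OF epi_hom[OF f] epi_hom[OF g] b] by simp
  then have "cat_comp C a g = cat_comp C b g"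
    using epi_cancel[OF f] comp_hom[OF epi_hom[OF g] a] comp_hom[OF epi_hom[OF g] b] by blast
  then show "a = b" using epi_cancel[OF g a b] by blast
qed

lemma iso_cancel_left: assumes g: "is_iso C Y Z g" and f: "f \<in> cat_hom C X Y"
  and gf: "is_iso C X Z (cat_comp C g f)" shows "is_iso C X Y f"
proof -
  have "f = cat_comp C (inv_arr Y Z g) (cat_comp C g f)"
    using inv_arr[OF g] f assoc[OF f iso_hom[OF g] inv_arr(4)[OF g]] by simp
  then show ?thesis using iso_comp[OF gf inv_arr(1)[OF g]] by simp
qed

lemma iso_cancel_right: assumes f: "is_iso C X Y f" and g: "g \<in> cat_hom C Y Z"
  and gf: "is_iso C X Z (cat_comp C g f)" shows "is_iso C Y Z g"
proof -
  have "g = cat_comp C (cat_comp C g f) (inv_arr X Y f)"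
    using inv_arr[OF f] g assoc[OF inv_arr(4)[OF f] iso_hom[OF f] g] by simp
  then show ?thesis using iso_comp[OF inv_arr(1)[OF f] gf] by simp
qed

lemma inv_arr_naturality:
  assumes e: "is_iso C X1 Y1 e" and e': "is_iso C X2 Y2 e'" and a: "a \<in> cat_hom C X1 X2"
    and b: "b \<in> cat_hom C Y1 Y2" and sq: "cat_comp C b e = cat_comp C e' a"
  shows "cat_comp C a (inv_arr X1 Y1 e) = cat_comp C (inv_arr X2 Y2 e') b"
proof -
  note i = inv_arr[OF e] and i' = inv_arr[OF e']
  have eh: "e \<in> cat_hom C X1 Y1" and e'h: "e' \<in> cat_hom C X2 Y2" using e e' iso_hom by auto
  have "cat_comp C (inv_arr X2 Y2 e') b
      = cat_comp C (inv_arr X2 Y2 e') (cat_comp C (cat_comp C b e) (inv_arr X1 Y1 e))"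
    using i(3) b assoc[OF i(4) eh b] by simp
  also have "\<dots> = cat_comp C (cat_comp C (inv_arr X2 Y2 e') e') (cat_comp C a (inv_arr X1 Y1 e))"
    using sq assoc[OF i(4) a e'h] assoc[OF comp_hom[OF i(4) a] e'h i'(4)] by simp
  also have "\<dots> = cat_comp C a (inv_arr X1 Y1 e)" using i'(2) comp_hom[OF i(4) a] by simp
  finally show ?thesis by simp
qed

lemma zero_ob_ob: "zero_ob C Z \<Longrightarrow> Z \<in> cat_ob C"
  unfolding zero_ob_def by blast

lemma zero_ob_hom_from: "zero_ob C Z \<Longrightarrow> X \<in> cat_ob C \<Longrightarrow> \<exists>f. f \<in> cat_hom C Z X"
  unfolding zero_ob_def by blast

lemma zero_ob_hom_to: "zero_ob C Z \<Longrightarrow> X \<in> cat_ob C \<Longrightarrow> \<exists>f. f \<in> cat_hom C X Z"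
  unfolding zero_ob_def by blast

lemma zero_ob_hom_from_unique: "zero_ob C Z \<Longrightarrow> f \<in> cat_hom C Z X \<Longrightarrow> g \<in> cat_hom C Z X \<Longrightarrow> f = g"
  unfolding zero_ob_def using hom_cod_ob by blast

lemma zero_ob_hom_to_unique: "zero_ob C Z \<Longrightarrow> f \<in> cat_hom C X Z \<Longrightarrow> g \<in> cat_hom C X Z \<Longrightarrow> f = g"
  unfolding zero_ob_def using hom_dom_ob by blast

lemma zero_arr_hom: "zero_arr C X Y f \<Longrightarrow> f \<in> cat_hom C X Y"
  unfolding zero_arr_def by blast

lemma zero_arr_unique: "zero_arr C X Y f \<Longrightarrow> zero_arr C X Y f' \<Longrightarrow> f = f'"
proof -
  assume "zero_arr C X Y f" "zero_arr C X Y f'"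
  then obtain Z g h Z' g' h' where Z: "zero_ob C Z" "g \<in> cat_hom C X Z" "h \<in> cat_hom C Z Y" "f = cat_comp C h g"
    and Z': "zero_ob C Z'" "g' \<in> cat_hom C X Z'" "h' \<in> cat_hom C Z' Y" "f' = cat_comp C h' g'"
    unfolding zero_arr_def by blast
  obtain t where t: "t \<in> cat_hom C Z Z'" using zero_ob_hom_from[OF Z(1) zero_ob_ob[OF Z'(1)]] by blast
  have 1: "g' = cat_comp C t g" using zero_ob_hom_to_unique[OF Z'(1) Z'(2) comp_hom[OF Z(2) t]] .
  have 2: "h = cat_comp C h' t" using zero_ob_hom_from_unique[OF Z(1) Z(3) comp_hom[OF t Z'(3)]] .
  show "f = f'" using Z(4) Z'(4) 1 2 assoc[OF Z(2) t Z'(3)] by simp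
qed

lemma zero_arr_comp_right: "zero_arr C X Y f \<Longrightarrow> g \<in> cat_hom C W X \<Longrightarrow> zero_arr C W Y (cat_comp C f g)"
proof -
  assume "zero_arr C X Y f" and g: "g \<in> cat_hom C W X"
  then obtain Z a b where Z: "zero_ob C Z" "a \<in> cat_hom C X Z" "b \<in> cat_hom C Z Y" "f = cat_comp C b a"
    unfolding zero_arr_def by blast
  have "cat_comp C f g = cat_comp C b (cat_comp C a g)" using assoc[OF g Z(2) Z(3)] Z(4) by simp
  then show ?thesis unfolding zero_arr_def using Z(1,3) comp_hom[OF g Z(2)] comp_hom[OF comp_hom[OF g Z(2)] Z(3)]
    by (intro conjI exI[of _ Z] exI[of _ "cat_comp C a g"] exI[of _ b]) simp_all
qed

lemma zero_arr_comp_left: "zero_arr C X Y f \<Longrightarrow> g \<in> cat_hom C Y V \<Longrightarrow> zero_arr C X V (cat_comp C g f)"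
proof -
  assume "zero_arr C X Y f" and g: "g \<in> cat_hom C Y V"
  then obtain Z a b where Z: "zero_ob C Z" "a \<in> cat_hom C X Z" "b \<in> cat_hom C Z Y" "f = cat_comp C b a"
    unfolding zero_arr_def by blast
  have "cat_comp C g f = cat_comp C (cat_comp C g b) a" using assoc[OF Z(2) Z(3) g] Z(4) by simp
  then show ?thesis unfolding zero_arr_def using Z(1,2) comp_hom[OF Z(3) g] comp_hom[OF Z(2) comp_hom[OF Z(3) g]]
    by (intro conjI exI[of _ Z] exI[of _ a] exI[of _ "cat_comp C g b"]) simp_all
qed

lemma zero_arr_from_zero_ob: "zero_ob C Z \<Longrightarrow> f \<in> cat_hom C Z Y \<Longrightarrow> zero_arr C Z Y f"
proof -
  assume Z: "zero_ob C Z" and f: "f \<in> cat_hom C Z Y"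
  have "f = cat_comp C f (cat_id C Z)" using f by simp
  then show ?thesis unfolding zero_arr_def using Z f id_hom[OF zero_ob_ob[OF Z]] by blast
qed

lemma zero_arr_to_zero_ob: "zero_ob C Z \<Longrightarrow> f \<in> cat_hom C X Z \<Longrightarrow> zero_arr C X Z f"
proof -
  assume Z: "zero_ob C Z" and f: "f \<in> cat_hom C X Z"
  have "f = cat_comp C (cat_id C Z) f" using f by simp
  then show ?thesis unfolding zero_arr_def using Z f id_hom[OF zero_ob_ob[OF Z]] by blast
qed

lemma retract_of_zero_ob: assumes Z: "zero_ob C Z" and s: "s \<in> cat_hom C Z K" and g: "g \<in> cat_hom C K Z"
  and sg: "cat_comp C s g = cat_id C K" shows "zero_ob C K"
  unfolding zero_ob_def
proof (intro conjI ballI)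
  show K: "K \<in> cat_ob C" using hom_cod_ob[OF s] .
  fix X assume X: "X \<in> cat_ob C"
  obtain t where t: "t \<in> cat_hom C Z X" using zero_ob_hom_from[OF Z X] by blast
  obtain v where v: "v \<in> cat_hom C X Z" using zero_ob_hom_to[OF Z X] by blast
  show "\<exists>!f. f \<in> cat_hom C K X"
  proof (rule ex1I[of _ "cat_comp C t g"])
    show "cat_comp C t g \<in> cat_hom C K X" using g t by blast
    fix f assume f: "f \<in> cat_hom C K X"
    have "f = cat_comp C f (cat_comp C s g)" using sg f by simp
    also have "\<dots> = cat_comp C (cat_comp C f s) g" using assoc[OF g s f] .
    also have "cat_comp C f s = t" using zero_ob_hom_from_unique[OF Z comp_hom[OF s f] t] .
    finally show "f = cat_comp C t g" .
  qed
  show "\<exists>!f. f \<in> cat_hom C X K"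
  proof (rule ex1I[of _ "cat_comp C s v"])
    show "cat_comp C s v \<in> cat_hom C X K" using s v by blast
    fix f assume f: "f \<in> cat_hom C X K"
    have "f = cat_comp C (cat_comp C s g) f" using sg f by simp
    also have "\<dots> = cat_comp C s (cat_comp C g f)" using assoc[OF f g s] by simp
    also have "cat_comp C g f = v" using zero_ob_hom_to_unique[OF Z comp_hom[OF f g] v] .
    finally show "f = cat_comp C s v" .
  qed
qed

lemma zero_ob_iso_dom: "is_iso C X Z f \<Longrightarrow> zero_ob C Z \<Longrightarrow> zero_ob C X"
  using retract_of_zero_ob[of Z "inv_arr X Z f" X f, OF _ inv_arr(4) iso_hom inv_arr(2)] by blast

lemma zero_ob_iso_cod: "is_iso C X Z f \<Longrightarrow> zero_ob C X \<Longrightarrow> zero_ob C Z"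
  using retract_of_zero_ob[of X f Z "inv_arr X Z f", OF _ iso_hom inv_arr(4) inv_arr(3)] by blast

lemma zero_ob_if_mono_zero_arr: assumes k: "is_mono C X Y k" and z: "zero_arr C X Y k" shows "zero_ob C X"
proof -
  obtain Z g h where Z: "zero_ob C Z" "g \<in> cat_hom C X Z" "h \<in> cat_hom C Z Y" "k = cat_comp C h g"
    using z unfolding zero_arr_def by blast
  obtain s where s: "s \<in> cat_hom C Z X" using zero_ob_hom_from[OF Z(1) hom_dom_ob[OF Z(2)]] by blast
  have ks: "cat_comp C k s = h" using zero_ob_hom_from_unique[OF Z(1) comp_hom[OF s mono_hom[OF k]] Z(3)] .
  have "cat_comp C k (cat_comp C s g) = cat_comp C k (cat_id C X)"
    using assoc[OF Z(2) s mono_hom[OF k]] ks Z(4) mono_hom[OF k] by simp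
  then have "cat_comp C s g = cat_id C X" using mono_cancel[OF k comp_hom[OF Z(2) s] id_hom[OF hom_dom_ob[OF Z(2)]]] by blast
  then show ?thesis using retract_of_zero_ob[OF Z(1) s Z(2)] by blast
qed

lemma zero_ob_if_epi_zero_arr: assumes k: "is_epi C X Y k" and z: "zero_arr C X Y k" shows "zero_ob C Y"
proof -
  obtain Z g h where Z: "zero_ob C Z" "g \<in> cat_hom C X Z" "h \<in> cat_hom C Z Y" "k = cat_comp C h g"
    using z unfolding zero_arr_def by blast
  obtain s where s: "s \<in> cat_hom C Y Z" using zero_ob_hom_to[OF Z(1) hom_cod_ob[OF Z(3)]] by blast
  have ks: "cat_comp C s k = g" using zero_ob_hom_to_unique[OF Z(1) comp_hom[OF epi_hom[OF k] s] Z(2)] .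
  have "cat_comp C (cat_comp C h s) k = cat_comp C (cat_id C Y) k"
    using assoc[OF epi_hom[OF k] s Z(3)] ks Z(4) epi_hom[OF k] by simp
  then have "cat_comp C h s = cat_id C Y" using epi_cancel[OF k comp_hom[OF s Z(3)] id_hom[OF hom_cod_ob[OF Z(3)]]] by blast
  then show ?thesis using retract_of_zero_ob[OF Z(1) Z(3) s] by blast
qed

lemma iso_between_zero_obs: "zero_ob C X \<Longrightarrow> zero_ob C Y \<Longrightarrow> f \<in> cat_hom C X Y \<Longrightarrow> is_iso C X Y f"
proof -
  assume X: "zero_ob C X" and Y: "zero_ob C Y" and f: "f \<in> cat_hom C X Y"
  obtain g where g: "g \<in> cat_hom C Y X" using zero_ob_hom_from[OF Y zero_ob_ob[OF X]] by blast
  have "cat_comp C g f = cat_id C X" using zero_ob_hom_from_unique[OF X comp_hom[OF f g] id_hom[OF zero_ob_ob[OF X]]] .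
  moreover have "cat_comp C f g = cat_id C Y" using zero_ob_hom_from_unique[OF Y comp_hom[OF g f] id_hom[OF zero_ob_ob[OF Y]]] .
  ultimately show ?thesis using isoI[OF f g] by blast
qed

lemma productD:
  assumes "is_product C X Y P p1 p2"
  shows "P \<in> cat_ob C" "p1 \<in> cat_hom C P X" "p2 \<in> cat_hom C P Y"
    "\<And>W f g. f \<in> cat_hom C W X \<Longrightarrow> g \<in> cat_hom C W Y \<Longrightarrow>
       \<exists>!u. u \<in> cat_hom C W P \<and> cat_comp C p1 u = f \<and> cat_comp C p2 u = g"
  using assms unfolding is_product_def by blast+

lemma coproductD:
  assumes "is_coproduct C X Y S i1 i2"
  shows "S \<in> cat_ob C" "i1 \<in> cat_hom C X S" "i2 \<in> cat_hom C Y S"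
    "\<And>W f g. f \<in> cat_hom C X W \<Longrightarrow> g \<in> cat_hom C Y W \<Longrightarrow>
       \<exists>!u. u \<in> cat_hom C S W \<and> cat_comp C u i1 = f \<and> cat_comp C u i2 = g"
  using assms unfolding is_coproduct_def by blast+

lemma coproductI:
  assumes "S \<in> cat_ob C" "i1 \<in> cat_hom C X S" "i2 \<in> cat_hom C Y S"
    "\<And>W f g. f \<in> cat_hom C X W \<Longrightarrow> g \<in> cat_hom C Y W \<Longrightarrow>
       \<exists>!u. u \<in> cat_hom C S W \<and> cat_comp C u i1 = f \<and> cat_comp C u i2 = g"
  shows "is_coproduct C X Y S i1 i2"
  unfolding is_coproduct_def using assms by blast

lemma coproduct_swap: "is_coproduct C X Y S i1 i2 \<Longrightarrow> is_coproduct C Y X S i2 i1"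
  unfolding is_coproduct_def by blast

lemma product_ex: "is_product C X Y P p1 p2 \<Longrightarrow> f \<in> cat_hom C W X \<Longrightarrow> g \<in> cat_hom C W Y \<Longrightarrow>
    \<exists>u. u \<in> cat_hom C W P \<and> cat_comp C p1 u = f \<and> cat_comp C p2 u = g"
  using productD(4) by blast

lemma coproduct_ex: "is_coproduct C X Y S i1 i2 \<Longrightarrow> f \<in> cat_hom C X W \<Longrightarrow> g \<in> cat_hom C Y W \<Longrightarrow>
    \<exists>u. u \<in> cat_hom C S W \<and> cat_comp C u i1 = f \<and> cat_comp C u i2 = g"
  using coproductD(4) by blast

lemma product_unique:
  assumes P: "is_product C X Y P p1 p2" and u: "u \<in> cat_hom C W P" and v: "v \<in> cat_hom C W P"
    and "cat_comp C p1 u = cat_comp C p1 v" "cat_comp C p2 u = cat_comp C p2 v"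
  shows "u = v"
  by (rule ex1_unique[OF productD(4)[OF P comp_hom[OF u productD(2)[OF P]] comp_hom[OF u productD(3)[OF P]]]])
    (use u v assms(4,5) in simp_all)

lemma coproduct_unique:
  assumes S: "is_coproduct C X Y S i1 i2" and u: "u \<in> cat_hom C S W" and v: "v \<in> cat_hom C S W"
    and "cat_comp C u i1 = cat_comp C v i1" "cat_comp C u i2 = cat_comp C v i2"
  shows "u = v"
  by (rule ex1_unique[OF coproductD(4)[OF S comp_hom[OF coproductD(2)[OF S] u] comp_hom[OF coproductD(3)[OF S] u]]])
    (use u v assms(4,5) in simp_all)

lemma coproduct_iso_transport:
  assumes S: "is_coproduct C X1 X2 S a b" and p: "is_iso C S X p"
  shows "is_coproduct C X1 X2 X (cat_comp C p a) (cat_comp C p b)"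
proof (rule coproductI)
  have ph: "p \<in> cat_hom C S X" using iso_hom[OF p] .
  have ah: "a \<in> cat_hom C X1 S" and bh: "b \<in> cat_hom C X2 S" using coproductD[OF S] by auto
  show "X \<in> cat_ob C" using hom_cod_ob[OF ph] .
  show "cat_comp C p a \<in> cat_hom C X1 X" "cat_comp C p b \<in> cat_hom C X2 X" using ah bh ph by auto
  fix W f g assume f: "f \<in> cat_hom C X1 W" and g: "g \<in> cat_hom C X2 W"
  obtain t where t: "t \<in> cat_hom C S W" "cat_comp C t a = f" "cat_comp C t b = g" using coproduct_ex[OF S f g] by blast
  define q where "q = inv_arr S X p"
  have q: "q \<in> cat_hom C X S" "cat_comp C q p = cat_id C S" "cat_comp C p q = cat_id C X"
    using inv_arr[OF p] q_def by auto
  show "\<exists>!u. u \<in> cat_hom C X W \<and> cat_comp C u (cat_comp C p a) = f \<and> cat_comp C u (cat_comp C p b) = g"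
  proof (rule ex1I[of _ "cat_comp C t q"], intro conjI)
    show "cat_comp C t q \<in> cat_hom C X W" using t q by auto
    show "cat_comp C (cat_comp C t q) (cat_comp C p a) = f"
      using assoc[OF ah ph comp_hom[OF q(1) t(1)]] assoc[OF ph q(1) t(1)] q(2) t ah by simp
    show "cat_comp C (cat_comp C t q) (cat_comp C p b) = g"
      using assoc[OF bh ph comp_hom[OF q(1) t(1)]] assoc[OF ph q(1) t(1)] q(2) t bh by simp
    fix u assume u: "u \<in> cat_hom C X W \<and> cat_comp C u (cat_comp C p a) = f \<and> cat_comp C u (cat_comp C p b) = g"
    have "cat_comp C u p = t"
    proof (rule coproduct_unique[OF S comp_hom[OF ph conjunct1[OF u]] t(1)])
      show "cat_comp C (cat_comp C u p) a = cat_comp C t a" using assoc[OF ah ph conjunct1[OF u]] u t by simp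
      show "cat_comp C (cat_comp C u p) b = cat_comp C t b" using assoc[OF bh ph conjunct1[OF u]] u t by simp
    qed
    then have "cat_comp C (cat_comp C u p) q = cat_comp C t q" by simp
    then show "u = cat_comp C t q" using assoc[OF q(1) ph conjunct1[OF u]] q(3) id_right[OF conjunct1[OF u]] by simp
  qed
qed

lemma coproduct_zero_right_iso: assumes S: "is_coproduct C X Z S a b" and Z: "zero_ob C Z"
  shows "is_iso C X S a"
proof -
  have ah: "a \<in> cat_hom C X S" and bh: "b \<in> cat_hom C Z S" using coproductD[OF S] by auto
  have X: "X \<in> cat_ob C" and So: "S \<in> cat_ob C" using hom_obs[OF ah] by auto
  obtain z where z: "z \<in> cat_hom C Z X" using zero_ob_hom_from[OF Z X] by blast
  obtain r where r: "r \<in> cat_hom C S X" "cat_comp C r a = cat_id C X" "cat_comp C r b = z"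
    using coproduct_ex[OF S id_hom[OF X] z] by blast
  have "cat_comp C a r = cat_id C S"
  proof (rule coproduct_unique[OF S comp_hom[OF r(1) ah] id_hom[OF So]])
    show "cat_comp C (cat_comp C a r) a = cat_comp C (cat_id C S) a"
      using assoc[OF ah r(1) ah] r(2) ah by simp
    have "cat_comp C a z = b" using zero_ob_hom_from_unique[OF Z comp_hom[OF z ah] bh] .
    then show "cat_comp C (cat_comp C a r) b = cat_comp C (cat_id C S) b"
      using assoc[OF bh r(1) ah] r(3) bh by simp
  qed
  then show ?thesis using isoI[OF ah r(1) r(2)] by blast
qed

lemma coproduct_zero_left_iso: "is_coproduct C Z X S a b \<Longrightarrow> zero_ob C Z \<Longrightarrow> is_iso C X S b"
  using coproduct_zero_right_iso coproduct_swap by blast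

lemma kernelD:
  assumes "is_kernel C X Y f K k"
  shows "f \<in> cat_hom C X Y" "k \<in> cat_hom C K X" "zero_arr C K Y (cat_comp C f k)"
    "\<And>W g. g \<in> cat_hom C W X \<Longrightarrow> zero_arr C W Y (cat_comp C f g) \<Longrightarrow> \<exists>!u. u \<in> cat_hom C W K \<and> cat_comp C k u = g"
  using assms[unfolded is_kernel_def] by blast+

lemma cokernelD:
  assumes "is_cokernel C X Y f Q q"
  shows "f \<in> cat_hom C X Y" "q \<in> cat_hom C Y Q" "zero_arr C X Q (cat_comp C q f)"
    "\<And>W g. g \<in> cat_hom C Y W \<Longrightarrow> zero_arr C X W (cat_comp C g f) \<Longrightarrow> \<exists>!u. u \<in> cat_hom C Q W \<and> cat_comp C u q = g"
  using assms[unfolded is_cokernel_def] by blast+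

lemma kernelI:
  assumes "f \<in> cat_hom C X Y" "k \<in> cat_hom C K X" "zero_arr C K Y (cat_comp C f k)"
    "\<And>W g. g \<in> cat_hom C W X \<Longrightarrow> zero_arr C W Y (cat_comp C f g) \<Longrightarrow> \<exists>!u. u \<in> cat_hom C W K \<and> cat_comp C k u = g"
  shows "is_kernel C X Y f K k"
  unfolding is_kernel_def using assms by blast

lemma cokernelI:
  assumes "f \<in> cat_hom C X Y" "q \<in> cat_hom C Y Q" "zero_arr C X Q (cat_comp C q f)"
    "\<And>W g. g \<in> cat_hom C Y W \<Longrightarrow> zero_arr C X W (cat_comp C g f) \<Longrightarrow> \<exists>!u. u \<in> cat_hom C Q W \<and> cat_comp C u q = g"
  shows "is_cokernel C X Y f Q q"
  unfolding is_cokernel_def using assms by blast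

lemma kernel_factor: "is_kernel C X Y f K k \<Longrightarrow> g \<in> cat_hom C W X \<Longrightarrow> zero_arr C W Y (cat_comp C f g) \<Longrightarrow>
  \<exists>u. u \<in> cat_hom C W K \<and> cat_comp C k u = g"
  by (erule ex1_implies_ex[OF kernelD(4)])

lemma cokernel_factor: "is_cokernel C X Y f Q q \<Longrightarrow> g \<in> cat_hom C Y W \<Longrightarrow> zero_arr C X W (cat_comp C g f) \<Longrightarrow>
  \<exists>u. u \<in> cat_hom C Q W \<and> cat_comp C u q = g"
  by (erule ex1_implies_ex[OF cokernelD(4)])

lemma kernel_mono: assumes k: "is_kernel C X Y f K k" shows "is_mono C K X k"
  unfolding is_mono_def
proof (intro conjI allI impI)
  show kh: "k \<in> cat_hom C K X" using kernelD(2)[OF k] .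
  have fh: "f \<in> cat_hom C X Y" and z: "zero_arr C K Y (cat_comp C f k)" using kernelD[OF k] by blast+
  fix W g h assume g: "g \<in> cat_hom C W K" and h: "h \<in> cat_hom C W K" and e: "cat_comp C k g = cat_comp C k h"
  have "zero_arr C W Y (cat_comp C f (cat_comp C k g))" using zero_arr_comp_right[OF z g] assoc[OF g kh fh] by simp
  then have "\<exists>!u. u \<in> cat_hom C W K \<and> cat_comp C k u = cat_comp C k g"
    using kernelD(4)[OF k comp_hom[OF g kh]] by blast
  then show "g = h" by (rule ex1_unique) (use g h e in simp_all)
qed

lemma cokernel_epi: assumes q: "is_cokernel C X Y f Q q" shows "is_epi C Y Q q"
  unfolding is_epi_def
proof (intro conjI allI impI)
  show qh: "q \<in> cat_hom C Y Q" using cokernelD(2)[OF q] .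
  have fh: "f \<in> cat_hom C X Y" and z: "zero_arr C X Q (cat_comp C q f)" using cokernelD[OF q] by blast+
  fix W g h assume g: "g \<in> cat_hom C Q W" and h: "h \<in> cat_hom C Q W" and e: "cat_comp C g q = cat_comp C h q"
  have "zero_arr C X W (cat_comp C (cat_comp C g q) f)" using zero_arr_comp_left[OF z g] assoc[OF fh qh g] by simp
  then have "\<exists>!u. u \<in> cat_hom C Q W \<and> cat_comp C u q = cat_comp C g q"
    using cokernelD(4)[OF q comp_hom[OF qh g]] by blast
  then show "g = h" by (rule ex1_unique) (use g h e in simp_all)
qed

lemma kernel_of_cokernel_of_kernel: assumes k: "is_kernel C X Y f K k" and q: "is_cokernel C K X k Q q"
  shows "is_kernel C X Q q K k"
proof (rule kernelI)
  show qh: "q \<in> cat_hom C X Q" and kh: "k \<in> cat_hom C K X" and "zero_arr C K Q (cat_comp C q k)"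
    using cokernelD[OF q] by blast+
  have fh: "f \<in> cat_hom C X Y" and fk: "zero_arr C K Y (cat_comp C f k)" using kernelD[OF k] by blast+
  obtain v where v: "v \<in> cat_hom C Q Y" "cat_comp C v q = f" using cokernel_factor[OF q fh fk] by blast
  fix W g assume g: "g \<in> cat_hom C W X" and z: "zero_arr C W Q (cat_comp C q g)"
  have "zero_arr C W Y (cat_comp C f g)" using zero_arr_comp_left[OF z v(1)] assoc[OF g qh v(1)] v(2) by simp
  then show "\<exists>!u. u \<in> cat_hom C W K \<and> cat_comp C k u = g" using kernelD(4)[OF k g] by blast
qed

lemma cokernel_of_kernel_of_cokernel: assumes q: "is_cokernel C X Y f Q q" and k: "is_kernel C Y Q q K k"
  shows "is_cokernel C K Y k Q q"
proof (rule cokernelI)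
  show qh: "q \<in> cat_hom C Y Q" and kh: "k \<in> cat_hom C K Y" and "zero_arr C K Q (cat_comp C q k)"
    using kernelD[OF k] by blast+
  have fh: "f \<in> cat_hom C X Y" and fq: "zero_arr C X Q (cat_comp C q f)" using cokernelD[OF q] by blast+
  obtain v where v: "v \<in> cat_hom C X K" "cat_comp C k v = f" using kernel_factor[OF k fh fq] by blast
  fix W g assume g: "g \<in> cat_hom C Y W" and z: "zero_arr C K W (cat_comp C g k)"
  have "zero_arr C X W (cat_comp C g f)" using zero_arr_comp_right[OF z v(1)] assoc[OF v(1) kh g] v(2) by simp
  then show "\<exists>!u. u \<in> cat_hom C Q W \<and> cat_comp C u q = g" using cokernelD(4)[OF q g] by blast
qed

end

section \<open>Abelian categories\<close>

locale abcat = cat C for C :: "('o,'a) category" +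
  assumes abel: "abelian C"
begin

lemma has_zero: "\<exists>Z. zero_ob C Z"
  using abel[unfolded abelian_def] by (elim conjE)

lemma has_product: "X \<in> cat_ob C \<Longrightarrow> Y \<in> cat_ob C \<Longrightarrow> \<exists>P p1 p2. is_product C X Y P p1 p2"
  using abel[unfolded abelian_def] by (elim conjE) blast

lemma has_coproduct: "X \<in> cat_ob C \<Longrightarrow> Y \<in> cat_ob C \<Longrightarrow> \<exists>S i1 i2. is_coproduct C X Y S i1 i2"
  using abel[unfolded abelian_def] by (elim conjE) blast

lemma kernel_ex: "f \<in> cat_hom C X Y \<Longrightarrow> \<exists>K k. is_kernel C X Y f K k"
  using abel[unfolded abelian_def] by (elim conjE) blast

lemma cokernel_ex: "f \<in> cat_hom C X Y \<Longrightarrow> \<exists>Q q. is_cokernel C X Y f Q q"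
  using abel[unfolded abelian_def] by (elim conjE) blast

lemma mono_is_kernel: "is_mono C K X k \<Longrightarrow> \<exists>Y f. is_kernel C X Y f K k"
  using abel[unfolded abelian_def] by (elim conjE) blast

lemma epi_is_cokernel: "is_epi C Y Q q \<Longrightarrow> \<exists>X f. is_cokernel C X Y f Q q"
  using abel[unfolded abelian_def] by (elim conjE) blast

lemma zero_arr_ex: assumes X: "X \<in> cat_ob C" and Y: "Y \<in> cat_ob C" shows "\<exists>f. zero_arr C X Y f"
proof -
  obtain Z where Z: "zero_ob C Z" using has_zero by blast
  obtain g where g: "g \<in> cat_hom C X Z" using zero_ob_hom_to[OF Z X] by blast
  obtain h where h: "h \<in> cat_hom C Z Y" using zero_ob_hom_from[OF Z Y] by blast
  show ?thesis unfolding zero_arr_def using Z g h comp_hom[OF g h] by blast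
qed

lemma zero_ob_if_id_unique: assumes X: "X \<in> cat_ob C" and id: "\<exists>!f. f \<in> cat_hom C X X"
  shows "zero_ob C X"
proof -
  obtain Z where Z: "zero_ob C Z" using has_zero by blast
  obtain s where s: "s \<in> cat_hom C Z X" using zero_ob_hom_from[OF Z X] by blast
  obtain g where g: "g \<in> cat_hom C X Z" using zero_ob_hom_to[OF Z X] by blast
  have "cat_comp C s g = cat_id C X" using ex1_unique[OF id comp_hom[OF g s] id_hom[OF X]] .
  then show ?thesis using retract_of_zero_ob[OF Z s g] by blast
qed

lemma initial_is_zero_ob: "X \<in> cat_ob C \<Longrightarrow> \<forall>W \<in> cat_ob C. \<exists>!f. f \<in> cat_hom C X W \<Longrightarrow> zero_ob C X"
  by (rule zero_ob_if_id_unique) blast+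

lemma terminal_is_zero_ob: "X \<in> cat_ob C \<Longrightarrow> \<forall>W \<in> cat_ob C. \<exists>!f. f \<in> cat_hom C W X \<Longrightarrow> zero_ob C X"
  by (rule zero_ob_if_id_unique) blast+

lemma zero_arr_mono_cancel: assumes m: "is_mono C Y V m" and g: "g \<in> cat_hom C X Y"
  and z: "zero_arr C X V (cat_comp C m g)" shows "zero_arr C X Y g"
proof -
  obtain z0 where z0: "zero_arr C X Y z0" using zero_arr_ex[OF hom_dom_ob[OF g] hom_cod_ob[OF g]] by blast
  have "cat_comp C m g = cat_comp C m z0" using zero_arr_unique[OF z zero_arr_comp_left[OF z0 mono_hom[OF m]]] .
  then have "g = z0" using mono_cancel[OF m g zero_arr_hom[OF z0]] by blast
  then show ?thesis using z0 by simp
qed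

lemma zero_arr_epi_cancel: assumes e: "is_epi C X Y e" and g: "g \<in> cat_hom C Y V"
  and z: "zero_arr C X V (cat_comp C g e)" shows "zero_arr C Y V g"
proof -
  obtain z0 where z0: "zero_arr C Y V z0" using zero_arr_ex[OF hom_dom_ob[OF g] hom_cod_ob[OF g]] by blast
  have "cat_comp C g e = cat_comp C z0 e" using zero_arr_unique[OF z zero_arr_comp_right[OF z0 epi_hom[OF e]]] .
  then have "g = z0" using epi_cancel[OF e g zero_arr_hom[OF z0]] by blast
  then show ?thesis using z0 by simp
qed

lemma zero_arr_iso_cancel_left: "is_iso C Y V m \<Longrightarrow> g \<in> cat_hom C X Y \<Longrightarrow>
    zero_arr C X V (cat_comp C m g) \<Longrightarrow> zero_arr C X Y g"
  using zero_arr_mono_cancel iso_mono by blast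

lemma zero_arr_iso_cancel_right: "is_iso C X Y e \<Longrightarrow> g \<in> cat_hom C Y V \<Longrightarrow>
    zero_arr C X V (cat_comp C g e) \<Longrightarrow> zero_arr C Y V g"
  using zero_arr_epi_cancel iso_epi by blast

lemma mono_short_exact: assumes m: "is_mono C K X m" shows "\<exists>Q q. short_exact C K X Q m q"
proof -
  obtain Y f where k: "is_kernel C X Y f K m" using mono_is_kernel m by blast
  obtain Q q where q: "is_cokernel C K X m Q q" using cokernel_ex mono_hom[OF m] by blast
  show ?thesis unfolding short_exact_def using kernel_of_cokernel_of_kernel[OF k q] q by blast
qed

lemma epi_short_exact: assumes e: "is_epi C Y Q e" shows "\<exists>K k. short_exact C K Y Q k e"
proof -
  obtain X f where q: "is_cokernel C X Y f Q e" using epi_is_cokernel e by blast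
  obtain K k where k: "is_kernel C Y Q e K k" using kernel_ex epi_hom[OF e] by blast
  show ?thesis unfolding short_exact_def using cokernel_of_kernel_of_cokernel[OF q k] k by blast
qed

text \<open>
  Freyd's definition provides no additive structure, so the cancellation arguments below replace
  a difference \<open>g - h\<close> by the pairing \<open>(g, h) : X \<rightarrow> W \<times> W\<close> followed by an arrow whose kernel
  is the diagonal of \<open>W\<close> (dually, by the copairing \<open>W \<amalg> W \<rightarrow> X\<close> preceded by an arrow whose
  cokernel is the codiagonal).
\<close>

lemma mono_if_kernel_trivial:
  assumes f: "f \<in> cat_hom C X Y"
    and triv: "\<And>W g. g \<in> cat_hom C W X \<Longrightarrow> zero_arr C W Y (cat_comp C f g) \<Longrightarrow> zero_arr C W X g"
  shows "is_mono C X Y f"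
  unfolding is_mono_def
proof (intro conjI allI impI f)
  fix W g h assume g: "g \<in> cat_hom C W X" and h: "h \<in> cat_hom C W X" and e: "cat_comp C f g = cat_comp C f h"
  have W: "W \<in> cat_ob C" using hom_dom_ob[OF g] .
  obtain S i1 i2 where S: "is_coproduct C W W S i1 i2" using has_coproduct W by blast
  obtain d where d: "d \<in> cat_hom C S W" "cat_comp C d i1 = cat_id C W" "cat_comp C d i2 = cat_id C W"
    using coproduct_ex[OF S id_hom[OF W] id_hom[OF W]] by blast
  have "is_epi C S W d" using split_epi[OF d(1) coproductD(2)[OF S] d(2)] .
  then obtain V k where k: "is_cokernel C V S k W d" using epi_is_cokernel by blast
  have kh: "k \<in> cat_hom C V S" using cokernelD(1)[OF k] .
  obtain t where t: "t \<in> cat_hom C S X" "cat_comp C t i1 = g" "cat_comp C t i2 = h"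
    using coproduct_ex[OF S g h] by blast
  have fg: "cat_comp C f g \<in> cat_hom C W Y" using comp_hom[OF g f] .
  have "cat_comp C f t = cat_comp C (cat_comp C f g) d"
  proof (rule coproduct_unique[OF S comp_hom[OF t(1) f] comp_hom[OF d(1) fg]])
    show "cat_comp C (cat_comp C f t) i1 = cat_comp C (cat_comp C (cat_comp C f g) d) i1"
      using assoc[OF coproductD(2)[OF S] t(1) f] assoc[OF coproductD(2)[OF S] d(1) fg] t d fg by simp
    show "cat_comp C (cat_comp C f t) i2 = cat_comp C (cat_comp C (cat_comp C f g) d) i2"
      using assoc[OF coproductD(3)[OF S] t(1) f] assoc[OF coproductD(3)[OF S] d(1) fg] t d fg e by simp
  qed
  then have "cat_comp C f (cat_comp C t k) = cat_comp C (cat_comp C f g) (cat_comp C d k)"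
    using assoc[OF kh t(1) f] assoc[OF kh d(1) fg] by simp
  moreover have "zero_arr C V Y (cat_comp C (cat_comp C f g) (cat_comp C d k))"
    using zero_arr_comp_left[OF cokernelD(3)[OF k] fg] .
  ultimately have "zero_arr C V X (cat_comp C t k)" using triv[OF comp_hom[OF kh t(1)]] by simp
  then obtain u where u: "u \<in> cat_hom C W X" "cat_comp C u d = t" using cokernel_factor[OF k t(1)] by blast
  have "g = u" using t(2) u assoc[OF coproductD(2)[OF S] d(1) u(1)] d(2) by simp
  moreover have "h = u" using t(3) u assoc[OF coproductD(3)[OF S] d(1) u(1)] d(3) by simp
  ultimately show "g = h" by simp
qed

lemma jointly_epi_if_trivial:
  assumes a: "a \<in> cat_hom C P X" and b: "b \<in> cat_hom C P' X"
    and triv: "\<And>W g. g \<in> cat_hom C X W \<Longrightarrow> zero_arr C P W (cat_comp C g a) \<Longrightarrow>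
      zero_arr C P' W (cat_comp C g b) \<Longrightarrow> zero_arr C X W g"
    and g: "g \<in> cat_hom C X W" and h: "h \<in> cat_hom C X W"
    and ea: "cat_comp C g a = cat_comp C h a" and eb: "cat_comp C g b = cat_comp C h b"
  shows "g = h"
proof -
  have W: "W \<in> cat_ob C" using hom_cod_ob[OF g] .
  obtain Pr p1 p2 where Pr: "is_product C W W Pr p1 p2" using has_product W by blast
  obtain d where d: "d \<in> cat_hom C W Pr" "cat_comp C p1 d = cat_id C W" "cat_comp C p2 d = cat_id C W"
    using product_ex[OF Pr id_hom[OF W] id_hom[OF W]] by blast
  have "is_mono C W Pr d" using split_mono[OF d(1) productD(2)[OF Pr] d(2)] .
  then obtain V k where k: "is_kernel C Pr V k W d" using mono_is_kernel by blast
  have kh: "k \<in> cat_hom C Pr V" using kernelD(1)[OF k] .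
  obtain t where t: "t \<in> cat_hom C X Pr" "cat_comp C p1 t = g" "cat_comp C p2 t = h"
    using product_ex[OF Pr g h] by blast
  have kills: "zero_arr C Q V (cat_comp C (cat_comp C k t) f)"
    if f: "f \<in> cat_hom C Q X" and ef: "cat_comp C g f = cat_comp C h f" for Q f
  proof -
    have gf: "cat_comp C g f \<in> cat_hom C Q W" using comp_hom[OF f g] .
    have "cat_comp C t f = cat_comp C d (cat_comp C g f)"
    proof (rule product_unique[OF Pr comp_hom[OF f t(1)] comp_hom[OF gf d(1)]])
      show "cat_comp C p1 (cat_comp C t f) = cat_comp C p1 (cat_comp C d (cat_comp C g f))"
        using assoc[OF f t(1) productD(2)[OF Pr]] assoc[OF gf d(1) productD(2)[OF Pr]] t d gf by simp
      show "cat_comp C p2 (cat_comp C t f) = cat_comp C p2 (cat_comp C d (cat_comp C g f))"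
        using assoc[OF f t(1) productD(3)[OF Pr]] assoc[OF gf d(1) productD(3)[OF Pr]] t d gf ef by simp
    qed
    then have "cat_comp C (cat_comp C k t) f = cat_comp C (cat_comp C k d) (cat_comp C g f)"
      using assoc[OF f t(1) kh] assoc[OF gf d(1) kh] by simp
    then show ?thesis using zero_arr_comp_right[OF kernelD(3)[OF k] gf] by simp
  qed
  have "zero_arr C X V (cat_comp C k t)" using triv[OF comp_hom[OF t(1) kh] kills[OF a ea] kills[OF b eb]] .
  then obtain u where u: "u \<in> cat_hom C X W" "cat_comp C d u = t" using kernel_factor[OF k t(1)] by blast
  have "g = u" using t(2) u assoc[OF u(1) d(1) productD(2)[OF Pr]] d(2) by simp
  moreover have "h = u" using t(3) u assoc[OF u(1) d(1) productD(3)[OF Pr]] d(3) by simp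
  ultimately show "g = h" by simp
qed

lemma epi_if_cokernel_trivial:
  assumes f: "f \<in> cat_hom C X Y"
    and triv: "\<And>W g. g \<in> cat_hom C Y W \<Longrightarrow> zero_arr C X W (cat_comp C g f) \<Longrightarrow> zero_arr C Y W g"
  shows "is_epi C X Y f"
  unfolding is_epi_def
proof (intro conjI allI impI f)
  fix W g h assume g: "g \<in> cat_hom C Y W" and h: "h \<in> cat_hom C Y W"
    and e: "cat_comp C g f = cat_comp C h f"
  show "g = h" by (rule jointly_epi_if_trivial[OF f f _ g h e e]) (use triv in blast)
qed

lemma mono_if_kernel_zero_ob:
  assumes f: "f \<in> cat_hom C X Y" and k: "is_kernel C X Y f K k" and K: "zero_ob C K"
  shows "is_mono C X Y f"
proof (rule mono_if_kernel_trivial[OF f])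
  fix W g assume g: "g \<in> cat_hom C W X" and z: "zero_arr C W Y (cat_comp C f g)"
  obtain u where u: "u \<in> cat_hom C W K" "cat_comp C k u = g" using kernel_factor[OF k g z] by blast
  show "zero_arr C W X g"
    using zero_arr_comp_left[OF zero_arr_to_zero_ob[OF K u(1)] kernelD(2)[OF k]] u(2) by simp
qed

lemma mono_epi_is_iso:
  assumes m: "is_mono C X Y m" and e: "is_epi C X Y m" shows "is_iso C X Y m"
proof -
  obtain V f where k: "is_kernel C Y V f X m" using mono_is_kernel m by blast
  have mh: "m \<in> cat_hom C X Y" using mono_hom[OF m] .
  have fh: "f \<in> cat_hom C Y V" using kernelD(1)[OF k] .
  have "zero_arr C Y V f" using zero_arr_epi_cancel[OF e fh kernelD(3)[OF k]] .
  then have "zero_arr C Y V (cat_comp C f (cat_id C Y))" using fh by simp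
  then obtain u where u: "u \<in> cat_hom C Y X" "cat_comp C m u = cat_id C Y"
    using kernel_factor[OF k id_hom[OF hom_cod_ob[OF mh]]] by blast
  have "cat_comp C m (cat_comp C u m) = cat_comp C m (cat_id C X)"
    using assoc[OF mh u(1) mh] u(2) mh by simp
  then have "cat_comp C u m = cat_id C X"
    using mono_cancel[OF m comp_hom[OF mh u(1)] id_hom[OF hom_dom_ob[OF mh]]] by blast
  then show ?thesis using isoI[OF mh u(1)] u(2) by blast
qed

end

section \<open>Functors and natural transformations\<close>

lemma functor_ob: "is_functor C D F \<Longrightarrow> X \<in> cat_ob C \<Longrightarrow> fob F X \<in> cat_ob D"
  unfolding is_functor_def by (drule conjunct1) blast

lemma functor_hom: "is_functor C D F \<Longrightarrow> f \<in> cat_hom C X Y \<Longrightarrow> farr F f \<in> cat_hom D (fob F X) (fob F Y)"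
  unfolding is_functor_def by (drule conjunct2[THEN conjunct1]) blast

lemma functor_id: "is_functor C D F \<Longrightarrow> X \<in> cat_ob C \<Longrightarrow> farr F (cat_id C X) = cat_id D (fob F X)"
  unfolding is_functor_def by (drule conjunct2[THEN conjunct2, THEN conjunct1]) blast

lemma functor_comp: "is_functor C D F \<Longrightarrow> f \<in> cat_hom C X Y \<Longrightarrow> g \<in> cat_hom C Y Z \<Longrightarrow>
    farr F (cat_comp C g f) = cat_comp D (farr F g) (farr F f)"
  unfolding is_functor_def by (drule conjunct2[THEN conjunct2, THEN conjunct2]) blast

lemma functorI:
  assumes "\<And>X. X \<in> cat_ob C \<Longrightarrow> fob F X \<in> cat_ob D"
    "\<And>X Y f. f \<in> cat_hom C X Y \<Longrightarrow> farr F f \<in> cat_hom D (fob F X) (fob F Y)"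
    "\<And>X. X \<in> cat_ob C \<Longrightarrow> farr F (cat_id C X) = cat_id D (fob F X)"
    "\<And>X Y Z f g. f \<in> cat_hom C X Y \<Longrightarrow> g \<in> cat_hom C Y Z \<Longrightarrow> farr F (cat_comp C g f) = cat_comp D (farr F g) (farr F f)"
  shows "is_functor C D F"
  unfolding is_functor_def using assms by blast

lemma functor_iso: assumes C: "is_category C" and F: "is_functor C D F" and f: "is_iso C X Y f"
  shows "is_iso D (fob F X) (fob F Y) (farr F f)"
proof -
  obtain g where g: "g \<in> cat_hom C Y X" "cat_comp C g f = cat_id C X" "cat_comp C f g = cat_id C Y"
    and fh: "f \<in> cat_hom C X Y" using f unfolding is_iso_def by blast
  have X: "X \<in> cat_ob C" and Y: "Y \<in> cat_ob C" using cat.hom_obs[OF cat.intro[OF C] fh] by auto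
  have 1: "cat_comp D (farr F g) (farr F f) = cat_id D (fob F X)"
    using functor_comp[OF F fh g(1)] g(2) functor_id[OF F X] by simp
  have 2: "cat_comp D (farr F f) (farr F g) = cat_id D (fob F Y)"
    using functor_comp[OF F g(1) fh] g(3) functor_id[OF F Y] by simp
  show ?thesis unfolding is_iso_def using 1 2 functor_hom[OF F fh] functor_hom[OF F g(1)] by blast
qed

lemma ff_functor: "fully_faithful C D F \<Longrightarrow> is_functor C D F"
  unfolding fully_faithful_def by blast

lemma ff_bij: "fully_faithful C D F \<Longrightarrow> X \<in> cat_ob C \<Longrightarrow> Y \<in> cat_ob C \<Longrightarrow>
   bij_betw (farr F) (cat_hom C X Y) (cat_hom D (fob F X) (fob F Y))"
  unfolding fully_faithful_def by blast

lemma ff_surj: "fully_faithful C D F \<Longrightarrow> X \<in> cat_ob C \<Longrightarrow> Y \<in> cat_ob C \<Longrightarrow>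
   g \<in> cat_hom D (fob F X) (fob F Y) \<Longrightarrow> \<exists>f \<in> cat_hom C X Y. farr F f = g"
  using ff_bij unfolding bij_betw_def by (metis imageE)

lemma ff_inj: "fully_faithful C D F \<Longrightarrow> f \<in> cat_hom C X Y \<Longrightarrow> f' \<in> cat_hom C X Y \<Longrightarrow> is_category C \<Longrightarrow>
   farr F f = farr F f' \<Longrightarrow> f = f'"
proof -
  assume F: "fully_faithful C D F" and f: "f \<in> cat_hom C X Y" and f': "f' \<in> cat_hom C X Y" and C: "is_category C"
    and e: "farr F f = farr F f'"
  have "X \<in> cat_ob C" "Y \<in> cat_ob C" using cat.hom_obs[OF cat.intro[OF C] f] by auto
  then have "inj_on (farr F) (cat_hom C X Y)" using ff_bij[OF F] unfolding bij_betw_def by blast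
  then show "f = f'" using f f' e unfolding inj_on_def by blast
qed

lemma ff_reflects_iso: assumes F: "fully_faithful C D F" and C: "is_category C" and D: "is_category D"
  and f: "f \<in> cat_hom C X Y" and i: "is_iso D (fob F X) (fob F Y) (farr F f)"
  shows "is_iso C X Y f"
proof -
  interpret C: cat C by (rule cat.intro[OF C])
  interpret D: cat D by (rule cat.intro[OF D])
  have X: "X \<in> cat_ob C" and Y: "Y \<in> cat_ob C" using C.hom_obs[OF f] by auto
  have Fu: "is_functor C D F" using ff_functor[OF F] .
  obtain g' where g': "g' \<in> cat_hom D (fob F Y) (fob F X)" "cat_comp D g' (farr F f) = cat_id D (fob F X)"
    "cat_comp D (farr F f) g' = cat_id D (fob F Y)" using i unfolding is_iso_def by blast
  obtain g where g: "g \<in> cat_hom C Y X" "farr F g = g'" using ff_surj[OF F Y X g'(1)] by blast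
  have "farr F (cat_comp C g f) = farr F (cat_id C X)"
    using functor_comp[OF Fu f g(1)] g g' functor_id[OF Fu X] by simp
  then have 1: "cat_comp C g f = cat_id C X" using ff_inj[OF F C.comp_hom[OF f g(1)] C.id_hom[OF X] C] by blast
  have "farr F (cat_comp C f g) = farr F (cat_id C Y)"
    using functor_comp[OF Fu g(1) f] g g' functor_id[OF Fu Y] by simp
  then have 2: "cat_comp C f g = cat_id C Y" using ff_inj[OF F C.comp_hom[OF g(1) f] C.id_hom[OF Y] C] by blast
  show ?thesis using C.isoI[OF f g(1) 1 2] .
qed

lemma functor_zero_arr:
  assumes D: "is_category D" and F: "is_functor C D F"
    and FZ: "\<And>Z. zero_ob C Z \<Longrightarrow> zero_ob D (fob F Z)" and f: "zero_arr C X Y f"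
  shows "zero_arr D (fob F X) (fob F Y) (farr F f)"
proof -
  obtain Z g h where Z: "zero_ob C Z" "g \<in> cat_hom C X Z" "h \<in> cat_hom C Z Y" "f = cat_comp C h g"
    using f unfolding zero_arr_def by blast
  have "farr F f = cat_comp D (farr F h) (farr F g)" using functor_comp[OF F Z(2) Z(3)] Z(4) by simp
  moreover have "cat_comp D (farr F h) (farr F g) \<in> cat_hom D (fob F X) (fob F Y)"
    using cat.comp_hom[OF cat.intro[OF D] functor_hom[OF F Z(2)] functor_hom[OF F Z(3)]] .
  ultimately show ?thesis
    unfolding zero_arr_def using FZ[OF Z(1)] functor_hom[OF F Z(2)] functor_hom[OF F Z(3)] by auto
qed

lemma abcatI: "abelian C \<Longrightarrow> abcat C"
  by (rule abcat.intro[OF cat.intro]) (auto simp: abelian_def abcat_axioms_def)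

lemma exact_functor_mono:
  assumes C: "abelian C" and D: "is_category D" and F: "exact_functor C D F" and m: "is_mono C X Y m"
  shows "is_mono D (fob F X) (fob F Y) (farr F m)"
proof -
  obtain Q q where "short_exact C X Y Q m q" using abcat.mono_short_exact[OF abcatI[OF C] m] by blast
  then have "short_exact D (fob F X) (fob F Y) (fob F Q) (farr F m) (farr F q)"
    using F unfolding exact_functor_def by blast
  then show ?thesis unfolding short_exact_def using cat.kernel_mono[OF cat.intro[OF D]] by blast
qed

lemma exact_functor_epi:
  assumes C: "abelian C" and D: "is_category D" and F: "exact_functor C D F" and e: "is_epi C Y Q e"
  shows "is_epi D (fob F Y) (fob F Q) (farr F e)"
proof -
  obtain K k where "short_exact C K Y Q k e" using abcat.epi_short_exact[OF abcatI[OF C] e] by blast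
  then have "short_exact D (fob F K) (fob F Y) (fob F Q) (farr F k) (farr F e)"
    using F unfolding exact_functor_def by blast
  then show ?thesis unfolding short_exact_def using cat.cokernel_epi[OF cat.intro[OF D]] by blast
qed

lemma fcomp_simps[simp]: "fob (fcomp G F) X = fob G (fob F X)" "farr (fcomp G F) f = farr G (farr F f)"
  unfolding fcomp_def by simp_all

lemma id_functor_simps[simp]: "fob (id_functor C) X = X" "farr (id_functor C) f = f"
  unfolding id_functor_def by simp_all

lemma fcomp_assoc: "fcomp H (fcomp G F) = fcomp (fcomp H G) F"
  unfolding fcomp_def by (simp add: comp_assoc)

lemma fcomp_id_left: "fcomp (id_functor D) F = F"
  unfolding fcomp_def id_functor_def by (cases F) (simp add: o_def)

lemma fcomp_id_right: "fcomp F (id_functor C) = F"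
  unfolding fcomp_def id_functor_def by (cases F) (simp add: o_def)

lemma fcomp_functor: assumes F: "is_functor C D F" and G: "is_functor D E G"
  shows "is_functor C E (fcomp G F)"
proof (rule functorI)
  fix X Y Z f g assume f: "f \<in> cat_hom C X Y" and g: "g \<in> cat_hom C Y Z"
  show "farr (fcomp G F) (cat_comp C g f) = cat_comp E (farr (fcomp G F) g) (farr (fcomp G F) f)"
    using functor_comp[OF F f g] functor_comp[OF G functor_hom[OF F f] functor_hom[OF F g]] by simp
qed (use F G in \<open>auto simp: functor_ob functor_hom functor_id\<close>)

lemma id_functor_functor: "is_category C \<Longrightarrow> is_functor C C (id_functor C)"
  by (rule functorI) (auto simp: cat.comp_hom cat.intro)

lemma nat_transI:
  assumes "is_functor C D F" "is_functor C D G"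
    "\<And>X. X \<in> cat_ob C \<Longrightarrow> \<eta> X \<in> cat_hom D (fob F X) (fob G X)"
    "\<And>X Y f. f \<in> cat_hom C X Y \<Longrightarrow> cat_comp D (farr G f) (\<eta> X) = cat_comp D (\<eta> Y) (farr F f)"
  shows "nat_trans C D F G \<eta>"
  unfolding nat_trans_def using assms by blast

lemma nat_transD:
  assumes "nat_trans C D F G \<eta>"
  shows "is_functor C D F" "is_functor C D G"
    "\<And>X. X \<in> cat_ob C \<Longrightarrow> \<eta> X \<in> cat_hom D (fob F X) (fob G X)"
    "\<And>X Y f. f \<in> cat_hom C X Y \<Longrightarrow> cat_comp D (farr G f) (\<eta> X) = cat_comp D (\<eta> Y) (farr F f)"
  using assms unfolding nat_trans_def by blast+

lemma nat_isoI: "nat_trans C D F G \<eta> \<Longrightarrow> (\<And>X. X \<in> cat_ob C \<Longrightarrow> is_iso D (fob F X) (fob G X) (\<eta> X)) \<Longrightarrow>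
    nat_iso C D F G \<eta>"
  unfolding nat_iso_def by blast

lemma nat_trans_vcomp:
  assumes C: "is_category C" and D: "is_category D"
    and \<eta>: "nat_trans C D F G \<eta>" and \<theta>: "nat_trans C D G H \<theta>"
  shows "nat_trans C D F H (\<lambda>X. cat_comp D (\<theta> X) (\<eta> X))"
proof (rule nat_transI[OF nat_transD(1)[OF \<eta>] nat_transD(2)[OF \<theta>]])
  interpret C: cat C using cat.intro[OF C] .
  interpret D: cat D using cat.intro[OF D] .
  note \<eta>h = nat_transD(3)[OF \<eta>] and \<theta>h = nat_transD(3)[OF \<theta>]
  show "cat_comp D (\<theta> X) (\<eta> X) \<in> cat_hom D (fob F X) (fob H X)" if "X \<in> cat_ob C" for X
    using \<eta>h \<theta>h that by blast
  fix X Y f assume f: "f \<in> cat_hom C X Y"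
  have X: "X \<in> cat_ob C" and Y: "Y \<in> cat_ob C" using C.hom_obs[OF f] by auto
  have Ff: "farr F f \<in> cat_hom D (fob F X) (fob F Y)" using functor_hom[OF nat_transD(1)[OF \<eta>] f] .
  have Gf: "farr G f \<in> cat_hom D (fob G X) (fob G Y)" using functor_hom[OF nat_transD(2)[OF \<eta>] f] .
  have Hf: "farr H f \<in> cat_hom D (fob H X) (fob H Y)" using functor_hom[OF nat_transD(2)[OF \<theta>] f] .
  have "cat_comp D (farr H f) (cat_comp D (\<theta> X) (\<eta> X)) = cat_comp D (cat_comp D (\<theta> Y) (farr G f)) (\<eta> X)"
    using D.assoc[OF \<eta>h[OF X] \<theta>h[OF X] Hf] nat_transD(4)[OF \<theta> f] by simp
  also have "\<dots> = cat_comp D (\<theta> Y) (cat_comp D (\<eta> Y) (farr F f))"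
    using D.assoc[OF \<eta>h[OF X] Gf \<theta>h[OF Y]] nat_transD(4)[OF \<eta> f] by simp
  also have "\<dots> = cat_comp D (cat_comp D (\<theta> Y) (\<eta> Y)) (farr F f)"
    using D.assoc[OF Ff \<eta>h[OF Y] \<theta>h[OF Y]] .
  finally show "cat_comp D (farr H f) (cat_comp D (\<theta> X) (\<eta> X)) = cat_comp D (cat_comp D (\<theta> Y) (\<eta> Y)) (farr F f)" .
qed

lemma nat_trans_whisker_left:
  assumes C: "is_category C" and \<eta>: "nat_trans C D F G \<eta>" and H: "is_functor D E H"
  shows "nat_trans C E (fcomp H F) (fcomp H G) (\<lambda>X. farr H (\<eta> X))"
proof (rule nat_transI)
  show "is_functor C E (fcomp H F)" "is_functor C E (fcomp H G)"
    using fcomp_functor[OF nat_transD(1)[OF \<eta>] H] fcomp_functor[OF nat_transD(2)[OF \<eta>] H] by blast+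
  show "farr H (\<eta> X) \<in> cat_hom E (fob (fcomp H F) X) (fob (fcomp H G) X)" if "X \<in> cat_ob C" for X
    using functor_hom[OF H nat_transD(3)[OF \<eta> that]] by simp
  fix X Y f assume f: "f \<in> cat_hom C X Y"
  have X: "X \<in> cat_ob C" and Y: "Y \<in> cat_ob C" using cat.hom_obs[OF cat.intro[OF C] f] by auto
  show "cat_comp E (farr (fcomp H G) f) (farr H (\<eta> X)) = cat_comp E (farr H (\<eta> Y)) (farr (fcomp H F) f)"
    using functor_comp[OF H nat_transD(3)[OF \<eta> X] functor_hom[OF nat_transD(2)[OF \<eta>] f]]
      functor_comp[OF H functor_hom[OF nat_transD(1)[OF \<eta>] f] nat_transD(3)[OF \<eta> Y]]
      nat_transD(4)[OF \<eta> f] by simp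
qed

lemma nat_trans_whisker_right:
  assumes \<eta>: "nat_trans D E F G \<eta>" and K: "is_functor C D K"
  shows "nat_trans C E (fcomp F K) (fcomp G K) (\<lambda>X. \<eta> (fob K X))"
  using nat_transD[OF \<eta>] fcomp_functor[OF K] functor_ob[OF K] functor_hom[OF K]
  by (intro nat_transI) simp_all

lemma nat_iso_sym: assumes C: "is_category C" and D: "is_category D" and n: "nat_iso C D F G \<eta>"
  shows "nat_iso C D G F (\<lambda>X. cat.inv_arr D (fob F X) (fob G X) (\<eta> X))"
proof -
  interpret D: cat D using cat.intro[OF D] .
  have \<eta>: "nat_trans C D F G \<eta>" and iso: "\<And>X. X \<in> cat_ob C \<Longrightarrow> is_iso D (fob F X) (fob G X) (\<eta> X)"
    using n unfolding nat_iso_def by blast+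
  show ?thesis
  proof (rule nat_isoI[OF nat_transI[OF nat_transD(2,1)[OF \<eta>]]])
    show "D.inv_arr (fob F X) (fob G X) (\<eta> X) \<in> cat_hom D (fob G X) (fob F X)"
      "is_iso D (fob G X) (fob F X) (D.inv_arr (fob F X) (fob G X) (\<eta> X))" if "X \<in> cat_ob C" for X
      using D.inv_arr[OF iso[OF that]] by blast+
    fix X Y f assume f: "f \<in> cat_hom C X Y"
    have X: "X \<in> cat_ob C" and Y: "Y \<in> cat_ob C" using cat.hom_obs[OF cat.intro[OF C] f] by auto
    show "cat_comp D (farr F f) (D.inv_arr (fob F X) (fob G X) (\<eta> X))
        = cat_comp D (D.inv_arr (fob F Y) (fob G Y) (\<eta> Y)) (farr G f)"
      using D.inv_arr_naturality[OF iso[OF X] iso[OF Y] functor_hom[OF nat_transD(1)[OF \<eta>] f]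
          functor_hom[OF nat_transD(2)[OF \<eta>] f] nat_transD(4)[OF \<eta> f]] .
  qed
qed

lemma prod_cat_simps:
  "cat_ob (prod_cat B C) = cat_ob B \<times> cat_ob C"
  "cat_hom (prod_cat B C) (X,X') (Y,Y') = cat_hom B X Y \<times> cat_hom C X' Y'"
  "cat_comp (prod_cat B C) (g,g') (f,f') = (cat_comp B g f, cat_comp C g' f')"
  "cat_id (prod_cat B C) (X,X') = (cat_id B X, cat_id C X')"
  unfolding prod_cat_def by auto

lemma prod_cat_hom: "cat_hom (prod_cat B C) P Q = cat_hom B (fst P) (fst Q) \<times> cat_hom C (snd P) (snd Q)"
  by (cases P, cases Q) (simp add: prod_cat_simps)

lemma prod_cat_comp: "cat_comp (prod_cat B C) g f = (cat_comp B (fst g) (fst f), cat_comp C (snd g) (snd f))"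
  by (cases g, cases f) (simp add: prod_cat_simps)

lemma prod_cat_id: "cat_id (prod_cat B C) P = (cat_id B (fst P), cat_id C (snd P))"
  by (cases P) (simp add: prod_cat_simps)

lemma is_category_prod_cat: assumes B: "is_category B" and C: "is_category C" shows "is_category (prod_cat B C)"
proof -
  interpret B: cat B using cat.intro[OF B] .
  interpret C: cat C using cat.intro[OF C] .
  show ?thesis unfolding is_category_def
  proof (intro conjI allI impI ballI)
    fix X Y assume a: "X \<notin> cat_ob (prod_cat B C) \<or> Y \<notin> cat_ob (prod_cat B C)"
    show "cat_hom (prod_cat B C) X Y = {}"
    proof (rule ccontr)
      assume "cat_hom (prod_cat B C) X Y \<noteq> {}"
      then obtain f g where "f \<in> cat_hom B (fst X) (fst Y)" "g \<in> cat_hom C (snd X) (snd Y)"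
        unfolding prod_cat_hom by blast
      then show False using a B.hom_obs C.hom_obs unfolding prod_cat_simps(1) by (metis mem_Times_iff)
    qed
  next
    fix X Y X' Y' assume "cat_hom (prod_cat B C) X Y \<inter> cat_hom (prod_cat B C) X' Y' \<noteq> {}"
    then obtain f g where "f \<in> cat_hom B (fst X) (fst Y)" "g \<in> cat_hom C (snd X) (snd Y)"
      "f \<in> cat_hom B (fst X') (fst Y')" "g \<in> cat_hom C (snd X') (snd Y')" unfolding prod_cat_hom by blast
    then show "X = X'" using B.hom_obs_unique C.hom_obs_unique by (metis prod.expand)
  next
    fix X Y X' Y' assume "cat_hom (prod_cat B C) X Y \<inter> cat_hom (prod_cat B C) X' Y' \<noteq> {}"
    then obtain f g where "f \<in> cat_hom B (fst X) (fst Y)" "g \<in> cat_hom C (snd X) (snd Y)"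
      "f \<in> cat_hom B (fst X') (fst Y')" "g \<in> cat_hom C (snd X') (snd Y')" unfolding prod_cat_hom by blast
    then show "Y = Y'" using B.hom_obs_unique C.hom_obs_unique by (metis prod.expand)
  next
    fix X assume "X \<in> cat_ob (prod_cat B C)"
    then show "cat_id (prod_cat B C) X \<in> cat_hom (prod_cat B C) X X"
      unfolding prod_cat_hom prod_cat_id prod_cat_simps(1) by (auto simp: mem_Times_iff)
  next
    fix X Y Z f g assume "f \<in> cat_hom (prod_cat B C) X Y" "g \<in> cat_hom (prod_cat B C) Y Z"
    then show "cat_comp (prod_cat B C) g f \<in> cat_hom (prod_cat B C) X Z"
      unfolding prod_cat_hom prod_cat_comp by (auto simp: mem_Times_iff)
  next
    fix X Y f assume "f \<in> cat_hom (prod_cat B C) X Y"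
    then show "cat_comp (prod_cat B C) (cat_id (prod_cat B C) Y) f = f"
      "cat_comp (prod_cat B C) f (cat_id (prod_cat B C) X) = f"
      unfolding prod_cat_hom prod_cat_comp prod_cat_id by (auto simp: mem_Times_iff)
  next
    fix W X Y Z f g h assume "f \<in> cat_hom (prod_cat B C) W X" "g \<in> cat_hom (prod_cat B C) X Y" "h \<in> cat_hom (prod_cat B C) Y Z"
    then show "cat_comp (prod_cat B C) h (cat_comp (prod_cat B C) g f) = cat_comp (prod_cat B C) (cat_comp (prod_cat B C) h g) f"
      unfolding prod_cat_hom prod_cat_comp by (auto simp: mem_Times_iff B.assoc C.assoc)
  qed
qed

lemma iso_prod_cat: assumes "is_iso B X Y f" "is_iso C X' Y' f'"
  shows "is_iso (prod_cat B C) (X,X') (Y,Y') (f,f')"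
  using assms unfolding is_iso_def prod_cat_simps by (auto simp: prod_cat_hom prod_cat_comp prod_cat_id)

definition pair_functor ::
  "('o,'a,'o1,'a1) cfunctor \<Rightarrow> ('o,'a,'o2,'a2) cfunctor \<Rightarrow> ('o,'a,'o1 \<times> 'o2,'a1 \<times> 'a2) cfunctor" where
  "pair_functor F G = \<lparr>fob = (\<lambda>X. (fob F X, fob G X)), farr = (\<lambda>f. (farr F f, farr G f))\<rparr>"

lemma pair_functor_simps[simp]:
  "fob (pair_functor F G) X = (fob F X, fob G X)" "farr (pair_functor F G) f = (farr F f, farr G f)"
  unfolding pair_functor_def by simp_all

lemma pair_functor_functor: "is_functor A B F \<Longrightarrow> is_functor A C G \<Longrightarrow> is_functor A (prod_cat B C) (pair_functor F G)"
  by (rule functorI) (auto simp: prod_cat_simps functor_ob functor_hom functor_id functor_comp)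

locale ff_ess_surj = A: cat A + D: cat D
  for A :: "('o1,'a1) category" and D :: "('o2,'a2) category" +
  fixes F :: "('o1,'a1,'o2,'a2) cfunctor"
  assumes ff: "fully_faithful A D F"
    and ess_surj: "\<And>Y. Y \<in> cat_ob D \<Longrightarrow> \<exists>X \<in> cat_ob A. \<exists>f. is_iso D (fob F X) Y f"
begin

lemma F: "is_functor A D F"
  using ff_functor[OF ff] .

definition G0 :: "'o2 \<Rightarrow> 'o1" where
  "G0 Y = (SOME X. X \<in> cat_ob A \<and> (\<exists>f. is_iso D (fob F X) Y f))"

definition \<psi> :: "'o2 \<Rightarrow> 'a2" where
  "\<psi> Y = (SOME f. is_iso D (fob F (G0 Y)) Y f)"

definition \<psi>i :: "'o2 \<Rightarrow> 'a2" where
  "\<psi>i Y = D.inv_arr (fob F (G0 Y)) Y (\<psi> Y)"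

lemma G0: "Y \<in> cat_ob D \<Longrightarrow> G0 Y \<in> cat_ob A \<and> (\<exists>f. is_iso D (fob F (G0 Y)) Y f)"
  unfolding G0_def by (rule someI_ex) (use ess_surj in blast)

lemma \<psi>_iso: "Y \<in> cat_ob D \<Longrightarrow> is_iso D (fob F (G0 Y)) Y (\<psi> Y)"
  unfolding \<psi>_def by (rule someI_ex) (use G0 in blast)

lemma \<psi>_hom: "Y \<in> cat_ob D \<Longrightarrow> \<psi> Y \<in> cat_hom D (fob F (G0 Y)) Y"
  using \<psi>_iso D.iso_hom by blast

lemma \<psi>i: "Y \<in> cat_ob D \<Longrightarrow> \<psi>i Y \<in> cat_hom D Y (fob F (G0 Y)) \<and>
    cat_comp D (\<psi>i Y) (\<psi> Y) = cat_id D (fob F (G0 Y)) \<and> cat_comp D (\<psi> Y) (\<psi>i Y) = cat_id D Y"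
  unfolding \<psi>i_def using D.inv_arr[OF \<psi>_iso] by blast

definition Ga :: "'a2 \<Rightarrow> 'a1" where
  "Ga g = inv_into (cat_hom A (G0 (D.arr_dom g)) (G0 (D.arr_cod g))) (farr F)
     (cat_comp D (\<psi>i (D.arr_cod g)) (cat_comp D g (\<psi> (D.arr_dom g))))"

lemma Ga: assumes g: "g \<in> cat_hom D Y Y'"
  shows "Ga g \<in> cat_hom A (G0 Y) (G0 Y')" "farr F (Ga g) = cat_comp D (\<psi>i Y') (cat_comp D g (\<psi> Y))"
proof -
  have Y: "Y \<in> cat_ob D" "Y' \<in> cat_ob D" using D.hom_obs[OF g] by auto
  have bij: "bij_betw (farr F) (cat_hom A (G0 Y) (G0 Y')) (cat_hom D (fob F (G0 Y)) (fob F (G0 Y')))"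
    using ff_bij[OF ff] G0 Y by blast
  have "cat_comp D (\<psi>i Y') (cat_comp D g (\<psi> Y)) \<in> cat_hom D (fob F (G0 Y)) (fob F (G0 Y'))"
    using \<psi>_hom[OF Y(1)] \<psi>i[OF Y(2)] g by blast
  then show "Ga g \<in> cat_hom A (G0 Y) (G0 Y')" "farr F (Ga g) = cat_comp D (\<psi>i Y') (cat_comp D g (\<psi> Y))"
    unfolding Ga_def D.arr_dom_cod[OF g] using bij by (simp_all add: bij_betw_def inv_into_into f_inv_into_f)
qed

definition G :: "('o2,'a2,'o1,'a1) cfunctor" where
  "G = \<lparr>fob = G0, farr = Ga\<rparr>"

lemma G_simps[simp]: "fob G Y = G0 Y" "farr G g = Ga g"
  unfolding G_def by simp_all

lemma \<psi>_natural: assumes g: "g \<in> cat_hom D Y Y'"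
  shows "cat_comp D (\<psi> Y') (farr F (Ga g)) = cat_comp D g (\<psi> Y)"
proof -
  have Y: "Y \<in> cat_ob D" "Y' \<in> cat_ob D" using D.hom_obs[OF g] by auto
  have gh: "cat_comp D g (\<psi> Y) \<in> cat_hom D (fob F (G0 Y)) Y'" using \<psi>_hom[OF Y(1)] g by blast
  show ?thesis using Ga(2)[OF g] D.assoc[OF gh conjunct1[OF \<psi>i[OF Y(2)]] \<psi>_hom[OF Y(2)]] \<psi>i[OF Y(2)] gh
    by simp
qed

lemma G_functor: "is_functor D A G"
proof (rule functorI)
  fix X assume X: "X \<in> cat_ob D"
  show "fob G X \<in> cat_ob A" using G0[OF X] by simp
  have "farr F (Ga (cat_id D X)) = cat_comp D (\<psi>i X) (\<psi> X)" using Ga(2)[OF D.id_hom[OF X]] \<psi>_hom[OF X] by simp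
  also have "\<dots> = farr F (cat_id A (G0 X))" using \<psi>i[OF X] functor_id[OF F] G0[OF X] by simp
  finally show "farr G (cat_id D X) = cat_id A (fob G X)"
    using ff_inj[OF ff Ga(1)[OF D.id_hom[OF X]] A.id_hom A.is_cat] G0[OF X] by simp
next
  fix X Y f assume "f \<in> cat_hom D X Y" then show "farr G f \<in> cat_hom A (fob G X) (fob G Y)" using Ga by simp
next
  fix X Y Z f g assume f: "f \<in> cat_hom D X Y" and g: "g \<in> cat_hom D Y Z"
  have Z: "Z \<in> cat_ob D" using D.hom_cod_ob[OF g] .
  have GgGf: "cat_comp A (Ga g) (Ga f) \<in> cat_hom A (G0 X) (G0 Z)" using Ga(1)[OF f] Ga(1)[OF g] by blast
  have "cat_comp D (\<psi> Z) (farr F (cat_comp A (Ga g) (Ga f)))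
      = cat_comp D (cat_comp D (\<psi> Z) (farr F (Ga g))) (farr F (Ga f))"
    using functor_comp[OF F Ga(1)[OF f] Ga(1)[OF g]]
      D.assoc[OF functor_hom[OF F Ga(1)[OF f]] functor_hom[OF F Ga(1)[OF g]] \<psi>_hom[OF Z]] by simp
  also have "\<dots> = cat_comp D g (cat_comp D (\<psi> Y) (farr F (Ga f)))"
    using \<psi>_natural[OF g] D.assoc[OF functor_hom[OF F Ga(1)[OF f]] \<psi>_hom[OF D.hom_dom_ob[OF g]] g] by simp
  also have "\<dots> = cat_comp D (cat_comp D g f) (\<psi> X)"
    using \<psi>_natural[OF f] D.assoc[OF \<psi>_hom[OF D.hom_dom_ob[OF f]] f g] by simp
  also have "\<dots> = cat_comp D (\<psi> Z) (farr F (Ga (cat_comp D g f)))"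
    using \<psi>_natural[OF D.comp_hom[OF f g]] by simp
  finally have "farr F (cat_comp A (Ga g) (Ga f)) = farr F (Ga (cat_comp D g f))"
    using D.mono_cancel[OF D.iso_mono[OF \<psi>_iso[OF Z]] functor_hom[OF F GgGf]
        functor_hom[OF F Ga(1)[OF D.comp_hom[OF f g]]]] by blast
  then show "farr G (cat_comp D g f) = cat_comp A (farr G g) (farr G f)"
    using ff_inj[OF ff Ga(1)[OF D.comp_hom[OF f g]] GgGf A.is_cat] by simp
qed

lemma FG_nat_iso: "nat_iso D D (fcomp F G) (id_functor D) \<psi>"
proof (rule nat_isoI[OF nat_transI[OF fcomp_functor[OF G_functor F] id_functor_functor[OF D.is_cat]]])
  show "\<psi> Y \<in> cat_hom D (fob (fcomp F G) Y) (fob (id_functor D) Y)"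
    "is_iso D (fob (fcomp F G) Y) (fob (id_functor D) Y) (\<psi> Y)" if "Y \<in> cat_ob D" for Y
    using \<psi>_hom[OF that] \<psi>_iso[OF that] by simp_all
  show "cat_comp D (farr (id_functor D) f) (\<psi> X) = cat_comp D (\<psi> Y) (farr (fcomp F G) f)"
    if "f \<in> cat_hom D X Y" for X Y f
    using \<psi>_natural[OF that] by simp
qed

definition \<chi> :: "'o1 \<Rightarrow> 'a1" where
  "\<chi> X = inv_into (cat_hom A (G0 (fob F X)) X) (farr F) (\<psi> (fob F X))"

lemma \<chi>: assumes X: "X \<in> cat_ob A"
  shows "\<chi> X \<in> cat_hom A (G0 (fob F X)) X" "farr F (\<chi> X) = \<psi> (fob F X)"
proof -
  have FX: "fob F X \<in> cat_ob D" using functor_ob[OF F X] .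
  have "bij_betw (farr F) (cat_hom A (G0 (fob F X)) X) (cat_hom D (fob F (G0 (fob F X))) (fob F X))"
    using ff_bij[OF ff] G0[OF FX] X by blast
  then show "\<chi> X \<in> cat_hom A (G0 (fob F X)) X" "farr F (\<chi> X) = \<psi> (fob F X)"
    unfolding \<chi>_def using \<psi>_hom[OF FX] by (simp_all add: bij_betw_def inv_into_into f_inv_into_f)
qed

lemma GF_nat_iso: "nat_iso A A (fcomp G F) (id_functor A) \<chi>"
proof (rule nat_isoI[OF nat_transI[OF fcomp_functor[OF F G_functor] id_functor_functor[OF A.is_cat]]])
  fix X assume X: "X \<in> cat_ob A"
  show "\<chi> X \<in> cat_hom A (fob (fcomp G F) X) (fob (id_functor A) X)" using \<chi>(1)[OF X] by simp
  show "is_iso A (fob (fcomp G F) X) (fob (id_functor A) X) (\<chi> X)"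
    using ff_reflects_iso[OF ff A.is_cat D.is_cat \<chi>(1)[OF X]] \<chi>(2)[OF X] \<psi>_iso[OF functor_ob[OF F X]] by simp
next
  fix X Y f assume f: "f \<in> cat_hom A X Y"
  have X: "X \<in> cat_ob A" and Y: "Y \<in> cat_ob A" using A.hom_obs[OF f] by auto
  have Ff: "farr F f \<in> cat_hom D (fob F X) (fob F Y)" using functor_hom[OF F f] .
  have GFf: "Ga (farr F f) \<in> cat_hom A (G0 (fob F X)) (G0 (fob F Y))" using Ga(1)[OF Ff] .
  have "farr F (cat_comp A (\<chi> Y) (Ga (farr F f))) = cat_comp D (\<psi> (fob F Y)) (farr F (Ga (farr F f)))"
    using functor_comp[OF F GFf \<chi>(1)[OF Y]] \<chi>(2)[OF Y] by simp
  also have "\<dots> = farr F (cat_comp A f (\<chi> X))"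
    using \<psi>_natural[OF Ff] functor_comp[OF F \<chi>(1)[OF X] f] \<chi>(2)[OF X] by simp
  finally have "cat_comp A (\<chi> Y) (Ga (farr F f)) = cat_comp A f (\<chi> X)"
    by (rule ff_inj[OF ff A.comp_hom[OF GFf \<chi>(1)[OF Y]] A.comp_hom[OF \<chi>(1)[OF X] f] A.is_cat])
  then show "cat_comp A (farr (id_functor A) f) (\<chi> X) = cat_comp A (\<chi> Y) (farr (fcomp G F) f)" by simp
qed

lemma equivalent: "equivalent_cat A D"
  unfolding equivalent_cat_def nat_isomorphic_def
  using F G_functor FG_nat_iso GF_nat_iso by blast

end

lemma equivalent_cat_if_ff_ess_surj:
  assumes "is_category A" "is_category D" "fully_faithful A D F"
    and "\<And>Y. Y \<in> cat_ob D \<Longrightarrow> \<exists>X \<in> cat_ob A. \<exists>f. is_iso D (fob F X) Y f"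
  shows "equivalent_cat A D"
  using assms by (intro ff_ess_surj.equivalent[of _ _ F]) (simp_all add: ff_ess_surj_def ff_ess_surj_axioms_def cat_def)

section \<open>Adjunctions\<close>

locale adj = C: cat C + D: cat D for C :: "('o1,'a1) category" and D :: "('o2,'a2) category" +
  fixes L :: "('o1,'a1,'o2,'a2) cfunctor" and R :: "('o2,'a2,'o1,'a1) cfunctor"
    and \<eta> :: "'o1 \<Rightarrow> 'a1" and \<epsilon> :: "'o2 \<Rightarrow> 'a2"
  assumes L: "is_functor C D L" and R: "is_functor D C R"
  and eta: "nat_trans C C (id_functor C) (fcomp R L) \<eta>"
  and eps: "nat_trans D D (fcomp L R) (id_functor D) \<epsilon>"
  and tri1: "\<And>X. X \<in> cat_ob C \<Longrightarrow> cat_comp D (\<epsilon> (fob L X)) (farr L (\<eta> X)) = cat_id D (fob L X)"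
  and tri2: "\<And>Y. Y \<in> cat_ob D \<Longrightarrow> cat_comp C (farr R (\<epsilon> Y)) (\<eta> (fob R Y)) = cat_id C (fob R Y)"

lemma adj_if_adjoint: assumes "adjoint C D L R" "is_category C" "is_category D"
  shows "\<exists>\<eta> \<epsilon>. adj C D L R \<eta> \<epsilon>"
  using assms unfolding adjoint_def adj_def adj_axioms_def cat_def by blast

context adj
begin

lemmas Lob = functor_ob[OF L] and Rob = functor_ob[OF R]
  and Lhom = functor_hom[OF L] and Rhom = functor_hom[OF R]
  and Lcomp = functor_comp[OF L] and Rcomp = functor_comp[OF R]
  and Lid = functor_id[OF L] and Rid = functor_id[OF R]

lemma eta_hom: "X \<in> cat_ob C \<Longrightarrow> \<eta> X \<in> cat_hom C X (fob R (fob L X))"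
  using eta unfolding nat_trans_def fcomp_def id_functor_def by simp

lemma eta_nat: "f \<in> cat_hom C X Y \<Longrightarrow> cat_comp C (farr R (farr L f)) (\<eta> X) = cat_comp C (\<eta> Y) f"
  using eta unfolding nat_trans_def fcomp_def id_functor_def by simp

lemma eps_hom: "Y \<in> cat_ob D \<Longrightarrow> \<epsilon> Y \<in> cat_hom D (fob L (fob R Y)) Y"
  using eps unfolding nat_trans_def fcomp_def id_functor_def by simp

lemma eps_nat: "g \<in> cat_hom D Y Y' \<Longrightarrow> cat_comp D g (\<epsilon> Y) = cat_comp D (\<epsilon> Y') (farr L (farr R g))"
  using eps unfolding nat_trans_def fcomp_def id_functor_def by simp

text \<open>
  The adjunction bijection \<open>Hom(L X, Y) \<cong> Hom(X, R Y)\<close> sends \<open>g\<close> to its transpose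
  \<open>R g \<circ> \<eta>\<^sub>X\<close>; its inverse sends \<open>f\<close> to the cotranspose \<open>\<epsilon>\<^sub>Y \<circ> L f\<close>.
\<close>

lemma cotranspose_hom: "f \<in> cat_hom C X (fob R Y) \<Longrightarrow> Y \<in> cat_ob D \<Longrightarrow> cat_comp D (\<epsilon> Y) (farr L f) \<in> cat_hom D (fob L X) Y"
  using D.comp_hom[OF Lhom eps_hom] .

lemma transpose_hom: "g \<in> cat_hom D (fob L X) Y \<Longrightarrow> X \<in> cat_ob C \<Longrightarrow> cat_comp C (farr R g) (\<eta> X) \<in> cat_hom C X (fob R Y)"
  using C.comp_hom[OF eta_hom Rhom] .

lemma cotranspose_transpose: assumes g: "g \<in> cat_hom D (fob L X) Y" and X: "X \<in> cat_ob C"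
  shows "cat_comp D (\<epsilon> Y) (farr L (cat_comp C (farr R g) (\<eta> X))) = g"
proof -
  have Y: "Y \<in> cat_ob D" using D.hom_cod_ob[OF g] .
  have "farr L (cat_comp C (farr R g) (\<eta> X)) = cat_comp D (farr L (farr R g)) (farr L (\<eta> X))"
    using Lcomp[OF eta_hom[OF X] Rhom[OF g]] .
  then have "cat_comp D (\<epsilon> Y) (farr L (cat_comp C (farr R g) (\<eta> X)))
     = cat_comp D (cat_comp D (\<epsilon> Y) (farr L (farr R g))) (farr L (\<eta> X))"
    using D.assoc[OF Lhom[OF eta_hom[OF X]] Lhom[OF Rhom[OF g]] eps_hom[OF Y]] by simp
  also have "\<dots> = cat_comp D (cat_comp D g (\<epsilon> (fob L X))) (farr L (\<eta> X))" using eps_nat[OF g] by simp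
  also have "\<dots> = cat_comp D g (cat_comp D (\<epsilon> (fob L X)) (farr L (\<eta> X)))"
    using D.assoc[OF Lhom[OF eta_hom[OF X]] eps_hom[OF Lob[OF X]] g] by simp
  also have "\<dots> = g" using tri1[OF X] g by simp
  finally show ?thesis .
qed

lemma transpose_cotranspose: assumes f: "f \<in> cat_hom C X (fob R Y)" and Y: "Y \<in> cat_ob D"
  shows "cat_comp C (farr R (cat_comp D (\<epsilon> Y) (farr L f))) (\<eta> X) = f"
proof -
  have X: "X \<in> cat_ob C" using C.hom_dom_ob[OF f] .
  have "farr R (cat_comp D (\<epsilon> Y) (farr L f)) = cat_comp C (farr R (\<epsilon> Y)) (farr R (farr L f))"
    using Rcomp[OF Lhom[OF f] eps_hom[OF Y]] .
  then have "cat_comp C (farr R (cat_comp D (\<epsilon> Y) (farr L f))) (\<eta> X)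
     = cat_comp C (farr R (\<epsilon> Y)) (cat_comp C (farr R (farr L f)) (\<eta> X))"
    using C.assoc[OF eta_hom[OF X] Rhom[OF Lhom[OF f]] Rhom[OF eps_hom[OF Y]]] by simp
  also have "\<dots> = cat_comp C (farr R (\<epsilon> Y)) (cat_comp C (\<eta> (fob R Y)) f)" using eta_nat[OF f] by simp
  also have "\<dots> = cat_comp C (cat_comp C (farr R (\<epsilon> Y)) (\<eta> (fob R Y))) f"
    using C.assoc[OF f eta_hom[OF Rob[OF Y]] Rhom[OF eps_hom[OF Y]]] by simp
  also have "\<dots> = f" using tri2[OF Y] f by simp
  finally show ?thesis .
qed

lemma transpose_inj: "g \<in> cat_hom D (fob L X) Y \<Longrightarrow> g' \<in> cat_hom D (fob L X) Y \<Longrightarrow> X \<in> cat_ob C \<Longrightarrow>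
  cat_comp C (farr R g) (\<eta> X) = cat_comp C (farr R g') (\<eta> X) \<Longrightarrow> g = g'"
  by (metis cotranspose_transpose)

lemma cotranspose_inj: "f \<in> cat_hom C X (fob R Y) \<Longrightarrow> f' \<in> cat_hom C X (fob R Y) \<Longrightarrow> Y \<in> cat_ob D \<Longrightarrow>
  cat_comp D (\<epsilon> Y) (farr L f) = cat_comp D (\<epsilon> Y) (farr L f') \<Longrightarrow> f = f'"
  by (metis transpose_cotranspose)

lemma transpose_precomp: assumes g: "g \<in> cat_hom D (fob L X') Y" and a: "a \<in> cat_hom C X X'"
  shows "cat_comp C (farr R (cat_comp D g (farr L a))) (\<eta> X) = cat_comp C (cat_comp C (farr R g) (\<eta> X')) a"
proof -
  have X: "X \<in> cat_ob C" using C.hom_dom_ob[OF a] .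
  have "cat_comp C (farr R (cat_comp D g (farr L a))) (\<eta> X) = cat_comp C (cat_comp C (farr R g) (farr R (farr L a))) (\<eta> X)"
    using Rcomp[OF Lhom[OF a] g] by simp
  also have "\<dots> = cat_comp C (farr R g) (cat_comp C (farr R (farr L a)) (\<eta> X))"
    using C.assoc[OF eta_hom[OF X] Rhom[OF Lhom[OF a]] Rhom[OF g]] by simp
  also have "\<dots> = cat_comp C (farr R g) (cat_comp C (\<eta> X') a)" using eta_nat[OF a] by simp
  also have "\<dots> = cat_comp C (cat_comp C (farr R g) (\<eta> X')) a"
    using C.assoc[OF a eta_hom[OF C.hom_cod_ob[OF a]] Rhom[OF g]] by simp
  finally show ?thesis .
qed

lemma transpose_postcomp: assumes g: "g \<in> cat_hom D (fob L X) Y" and b: "b \<in> cat_hom D Y Y'" and X: "X \<in> cat_ob C"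
  shows "cat_comp C (farr R (cat_comp D b g)) (\<eta> X) = cat_comp C (farr R b) (cat_comp C (farr R g) (\<eta> X))"
  using Rcomp[OF g b] C.assoc[OF eta_hom[OF X] Rhom[OF g] Rhom[OF b]] by simp

lemma R_arr_eq_if_counit_square:
  assumes f: "f \<in> cat_hom D Y Y'" and c: "c \<in> cat_hom C (fob R Y) (fob R Y')"
    and sq: "cat_comp D f (\<epsilon> Y) = cat_comp D (\<epsilon> Y') (farr L c)"
  shows "farr R f = c"
proof -
  have Y: "Y \<in> cat_ob D" and Y': "Y' \<in> cat_ob D" using D.hom_obs[OF f] by auto
  have "farr R f = cat_comp C (farr R f) (cat_comp C (farr R (\<epsilon> Y)) (\<eta> (fob R Y)))"
    using tri2[OF Y] Rhom[OF f] by simp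
  also have "\<dots> = cat_comp C (farr R (cat_comp D f (\<epsilon> Y))) (\<eta> (fob R Y))"
    using transpose_postcomp[OF eps_hom[OF Y] f Rob[OF Y]] by simp
  also have "\<dots> = c" using sq transpose_cotranspose[OF c Y'] by simp
  finally show ?thesis .
qed

lemma L_epi: assumes e: "is_epi C X X' e" shows "is_epi D (fob L X) (fob L X') (farr L e)"
  unfolding is_epi_def
proof (intro conjI allI impI)
  have eh: "e \<in> cat_hom C X X'" using C.epi_hom[OF e] .
  show "farr L e \<in> cat_hom D (fob L X) (fob L X')" using Lhom[OF eh] .
  fix W g h assume g: "g \<in> cat_hom D (fob L X') W" and h: "h \<in> cat_hom D (fob L X') W"
    and E: "cat_comp D g (farr L e) = cat_comp D h (farr L e)"
  have X': "X' \<in> cat_ob C" using C.hom_cod_ob[OF eh] .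
  have "cat_comp C (cat_comp C (farr R g) (\<eta> X')) e = cat_comp C (cat_comp C (farr R h) (\<eta> X')) e"
    using transpose_precomp[OF g eh] transpose_precomp[OF h eh] E by simp
  then have "cat_comp C (farr R g) (\<eta> X') = cat_comp C (farr R h) (\<eta> X')"
    using C.epi_cancel[OF e transpose_hom[OF g X'] transpose_hom[OF h X']] by blast
  then show "g = h" using transpose_inj[OF g h X'] by blast
qed

lemma R_mono: assumes m: "is_mono D Y Y' m" shows "is_mono C (fob R Y) (fob R Y') (farr R m)"
  unfolding is_mono_def
proof (intro conjI allI impI)
  have mh: "m \<in> cat_hom D Y Y'" using D.mono_hom[OF m] .
  show "farr R m \<in> cat_hom C (fob R Y) (fob R Y')" using Rhom[OF mh] .
  fix W g h assume g: "g \<in> cat_hom C W (fob R Y)" and h: "h \<in> cat_hom C W (fob R Y)"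
    and E: "cat_comp C (farr R m) g = cat_comp C (farr R m) h"
  have Y: "Y \<in> cat_ob D" "Y' \<in> cat_ob D" using D.hom_obs[OF mh] by auto
  have lt_nat: "\<And>f. f \<in> cat_hom C W (fob R Y) \<Longrightarrow>
      cat_comp D (\<epsilon> Y') (farr L (cat_comp C (farr R m) f)) = cat_comp D m (cat_comp D (\<epsilon> Y) (farr L f))"
  proof -
    fix f assume f: "f \<in> cat_hom C W (fob R Y)"
    have "cat_comp D (\<epsilon> Y') (farr L (cat_comp C (farr R m) f)) = cat_comp D (\<epsilon> Y') (cat_comp D (farr L (farr R m)) (farr L f))"
      using Lcomp[OF f Rhom[OF mh]] by simp
    also have "\<dots> = cat_comp D (cat_comp D (\<epsilon> Y') (farr L (farr R m))) (farr L f)"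
      using D.assoc[OF Lhom[OF f] Lhom[OF Rhom[OF mh]] eps_hom[OF Y(2)]] .
    also have "\<dots> = cat_comp D (cat_comp D m (\<epsilon> Y)) (farr L f)" using eps_nat[OF mh] by simp
    also have "\<dots> = cat_comp D m (cat_comp D (\<epsilon> Y) (farr L f))"
      using D.assoc[OF Lhom[OF f] eps_hom[OF Y(1)] mh] by simp
    finally show "cat_comp D (\<epsilon> Y') (farr L (cat_comp C (farr R m) f)) = cat_comp D m (cat_comp D (\<epsilon> Y) (farr L f))" .
  qed
  have "cat_comp D m (cat_comp D (\<epsilon> Y) (farr L g)) = cat_comp D m (cat_comp D (\<epsilon> Y) (farr L h))"
    using lt_nat[OF g] lt_nat[OF h] E by simp
  then have "cat_comp D (\<epsilon> Y) (farr L g) = cat_comp D (\<epsilon> Y) (farr L h)"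
    using D.mono_cancel[OF m cotranspose_hom[OF g Y(1)] cotranspose_hom[OF h Y(1)]] by blast
  then show "g = h" using cotranspose_inj[OF g h Y(1)] by blast
qed

lemma unique_hom_L: assumes X: "X \<in> cat_ob C" and Y: "Y \<in> cat_ob D" and s: "\<exists>!f. f \<in> cat_hom C X (fob R Y)"
  shows "\<exists>!g. g \<in> cat_hom D (fob L X) Y"
proof -
  obtain f where f: "f \<in> cat_hom C X (fob R Y)" using s by blast
  show ?thesis
  proof (rule ex1I[of _ "cat_comp D (\<epsilon> Y) (farr L f)"])
    show "cat_comp D (\<epsilon> Y) (farr L f) \<in> cat_hom D (fob L X) Y" using cotranspose_hom[OF f Y] .
    fix g assume g: "g \<in> cat_hom D (fob L X) Y"
    have "cat_comp C (farr R g) (\<eta> X) = f" using s f transpose_hom[OF g X] by blast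
    then show "g = cat_comp D (\<epsilon> Y) (farr L f)" using cotranspose_transpose[OF g X] by simp
  qed
qed

lemma unique_hom_R: assumes X: "X \<in> cat_ob C" and Y: "Y \<in> cat_ob D" and s: "\<exists>!g. g \<in> cat_hom D (fob L X) Y"
  shows "\<exists>!f. f \<in> cat_hom C X (fob R Y)"
proof -
  obtain g where g: "g \<in> cat_hom D (fob L X) Y" using s by blast
  show ?thesis
  proof (rule ex1I[of _ "cat_comp C (farr R g) (\<eta> X)"])
    show "cat_comp C (farr R g) (\<eta> X) \<in> cat_hom C X (fob R Y)" using transpose_hom[OF g X] .
    fix f assume f: "f \<in> cat_hom C X (fob R Y)"
    have "cat_comp D (\<epsilon> Y) (farr L f) = g" using s g cotranspose_hom[OF f Y] by blast
    then show "f = cat_comp C (farr R g) (\<eta> X)" using transpose_cotranspose[OF f Y] by simp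
  qed
qed

lemma L_preserves_coproduct: assumes S: "is_coproduct C X1 X2 S a b"
  shows "is_coproduct D (fob L X1) (fob L X2) (fob L S) (farr L a) (farr L b)"
proof (rule D.coproductI)
  have ah: "a \<in> cat_hom C X1 S" and bh: "b \<in> cat_hom C X2 S" and So: "S \<in> cat_ob C" using C.coproductD[OF S] by auto
  have X1: "X1 \<in> cat_ob C" and X2: "X2 \<in> cat_ob C" using C.hom_dom_ob[OF ah] C.hom_dom_ob[OF bh] .
  show "fob L S \<in> cat_ob D" using Lob[OF So] .
  show "farr L a \<in> cat_hom D (fob L X1) (fob L S)" using Lhom[OF ah] .
  show "farr L b \<in> cat_hom D (fob L X2) (fob L S)" using Lhom[OF bh] .
  fix W f g assume f: "f \<in> cat_hom D (fob L X1) W" and g: "g \<in> cat_hom D (fob L X2) W"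
  have W: "W \<in> cat_ob D" using D.hom_cod_ob[OF f] .
  obtain t where t: "t \<in> cat_hom C S (fob R W)" "cat_comp C t a = cat_comp C (farr R f) (\<eta> X1)"
      "cat_comp C t b = cat_comp C (farr R g) (\<eta> X2)"
    using C.coproduct_ex[OF S transpose_hom[OF f X1] transpose_hom[OF g X2]] by blast
  show "\<exists>!u. u \<in> cat_hom D (fob L S) W \<and> cat_comp D u (farr L a) = f \<and> cat_comp D u (farr L b) = g"
  proof (rule ex1I[of _ "cat_comp D (\<epsilon> W) (farr L t)"], intro conjI)
    show uh: "cat_comp D (\<epsilon> W) (farr L t) \<in> cat_hom D (fob L S) W" using cotranspose_hom[OF t(1) W] .
    have "cat_comp D (cat_comp D (\<epsilon> W) (farr L t)) (farr L a) = cat_comp D (\<epsilon> W) (farr L (cat_comp C t a))"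
      using D.assoc[OF Lhom[OF ah] Lhom[OF t(1)] eps_hom[OF W]] Lcomp[OF ah t(1)] by simp
    also have "\<dots> = f" using t(2) cotranspose_transpose[OF f X1] by simp
    finally show "cat_comp D (cat_comp D (\<epsilon> W) (farr L t)) (farr L a) = f" .
    have "cat_comp D (cat_comp D (\<epsilon> W) (farr L t)) (farr L b) = cat_comp D (\<epsilon> W) (farr L (cat_comp C t b))"
      using D.assoc[OF Lhom[OF bh] Lhom[OF t(1)] eps_hom[OF W]] Lcomp[OF bh t(1)] by simp
    also have "\<dots> = g" using t(3) cotranspose_transpose[OF g X2] by simp
    finally show "cat_comp D (cat_comp D (\<epsilon> W) (farr L t)) (farr L b) = g" .
    fix u assume u: "u \<in> cat_hom D (fob L S) W \<and> cat_comp D u (farr L a) = f \<and> cat_comp D u (farr L b) = g"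
    have "cat_comp C (farr R u) (\<eta> S) = t"
    proof (rule C.coproduct_unique[OF S transpose_hom[OF conjunct1[OF u] So] t(1)])
      show "cat_comp C (cat_comp C (farr R u) (\<eta> S)) a = cat_comp C t a"
        using transpose_precomp[OF conjunct1[OF u] ah] u t(2) by simp
      show "cat_comp C (cat_comp C (farr R u) (\<eta> S)) b = cat_comp C t b"
        using transpose_precomp[OF conjunct1[OF u] bh] u t(3) by simp
    qed
    then show "u = cat_comp D (\<epsilon> W) (farr L t)" using cotranspose_transpose[OF conjunct1[OF u] So] by simp
  qed
qed

lemma counit_iso_if_R_ff: assumes F: "fully_faithful D C R" and Y: "Y \<in> cat_ob D"
  shows "is_iso D (fob L (fob R Y)) Y (\<epsilon> Y)"
proof -
  have RY: "fob R Y \<in> cat_ob C" using Rob[OF Y] .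
  have LRY: "fob L (fob R Y) \<in> cat_ob D" using Lob[OF RY] .
  obtain g where g: "g \<in> cat_hom D Y (fob L (fob R Y))" "farr R g = \<eta> (fob R Y)"
    using ff_surj[OF F Y LRY eta_hom[OF RY]] by blast
  have "farr R (cat_comp D (\<epsilon> Y) g) = farr R (cat_id D Y)"
    using Rcomp[OF g(1) eps_hom[OF Y]] g(2) tri2[OF Y] Rid[OF Y] by simp
  then have 1: "cat_comp D (\<epsilon> Y) g = cat_id D Y" using ff_inj[OF F D.comp_hom[OF g(1) eps_hom[OF Y]] D.id_hom[OF Y] D.is_cat] by blast
  have "cat_comp C (farr R (cat_comp D g (\<epsilon> Y))) (\<eta> (fob R Y)) = cat_comp C (farr R g) (cat_comp C (farr R (\<epsilon> Y)) (\<eta> (fob R Y)))"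
    using transpose_postcomp[OF eps_hom[OF Y] g(1) RY] .
  also have "\<dots> = farr R g" using tri2[OF Y] Rhom[OF g(1)] by simp
  also have "\<dots> = cat_comp C (farr R (cat_id D (fob L (fob R Y)))) (\<eta> (fob R Y))"
    using g(2) Rid[OF LRY] eta_hom[OF RY] by simp
  finally have 2: "cat_comp D g (\<epsilon> Y) = cat_id D (fob L (fob R Y))"
    using transpose_inj[OF D.comp_hom[OF eps_hom[OF Y] g(1)] D.id_hom[OF LRY] RY] by blast
  show ?thesis using D.isoI[OF eps_hom[OF Y] g(1) 2 1] .
qed

lemma unit_iso_if_L_ff: assumes F: "fully_faithful C D L" and X: "X \<in> cat_ob C"
  shows "is_iso C X (fob R (fob L X)) (\<eta> X)"
proof -
  have LX: "fob L X \<in> cat_ob D" using Lob[OF X] .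
  have RLX: "fob R (fob L X) \<in> cat_ob C" using Rob[OF LX] .
  obtain h where h: "h \<in> cat_hom C (fob R (fob L X)) X" "farr L h = \<epsilon> (fob L X)"
    using ff_surj[OF F RLX X eps_hom[OF LX]] by blast
  have "farr L (cat_comp C h (\<eta> X)) = farr L (cat_id C X)"
    using Lcomp[OF eta_hom[OF X] h(1)] h(2) tri1[OF X] Lid[OF X] by simp
  then have 1: "cat_comp C h (\<eta> X) = cat_id C X" using ff_inj[OF F C.comp_hom[OF eta_hom[OF X] h(1)] C.id_hom[OF X] C.is_cat] by blast
  have "cat_comp D (\<epsilon> (fob L X)) (farr L (cat_comp C (\<eta> X) h)) = cat_comp D (cat_comp D (\<epsilon> (fob L X)) (farr L (\<eta> X))) (farr L h)"
    using Lcomp[OF h(1) eta_hom[OF X]] D.assoc[OF Lhom[OF h(1)] Lhom[OF eta_hom[OF X]] eps_hom[OF LX]] by simp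
  also have "\<dots> = farr L h" using tri1[OF X] Lhom[OF h(1)] by simp
  also have "\<dots> = cat_comp D (\<epsilon> (fob L X)) (farr L (cat_id C (fob R (fob L X))))"
    using h(2) Lid[OF RLX] eps_hom[OF LX] by simp
  finally have 2: "cat_comp C (\<eta> X) h = cat_id C (fob R (fob L X))"
    using cotranspose_inj[OF C.comp_hom[OF h(1) eta_hom[OF X]] C.id_hom[OF RLX] LX] by blast
  show ?thesis using C.isoI[OF eta_hom[OF X] h(1) 1 2] .
qed

end

locale adj_ab = adj C D L R \<eta> \<epsilon> + C: abcat C + D: abcat D
  for C :: "('o1,'a1) category" and D :: "('o2,'a2) category" and L R \<eta> \<epsilon>
begin

lemma L_zero_ob: assumes Z: "zero_ob C Z" shows "zero_ob D (fob L Z)"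
proof (rule D.initial_is_zero_ob)
  have Zo: "Z \<in> cat_ob C" using C.zero_ob_ob[OF Z] .
  show "fob L Z \<in> cat_ob D" using Lob[OF Zo] .
  show "\<forall>W\<in>cat_ob D. \<exists>!f. f \<in> cat_hom D (fob L Z) W"
  proof
    fix W assume W: "W \<in> cat_ob D"
    have "\<exists>!f. f \<in> cat_hom C Z (fob R W)" using Z Rob[OF W] unfolding zero_ob_def by blast
    then show "\<exists>!f. f \<in> cat_hom D (fob L Z) W" using unique_hom_L[OF Zo W] by blast
  qed
qed

lemma R_zero_ob: assumes Z: "zero_ob D Z" shows "zero_ob C (fob R Z)"
proof (rule C.terminal_is_zero_ob)
  have Zo: "Z \<in> cat_ob D" using D.zero_ob_ob[OF Z] .
  show "fob R Z \<in> cat_ob C" using Rob[OF Zo] .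
  show "\<forall>W\<in>cat_ob C. \<exists>!f. f \<in> cat_hom C W (fob R Z)"
  proof
    fix W assume W: "W \<in> cat_ob C"
    have "\<exists>!f. f \<in> cat_hom D (fob L W) Z" using Z Lob[OF W] unfolding zero_ob_def by blast
    then show "\<exists>!f. f \<in> cat_hom C W (fob R Z)" using unique_hom_R[OF W Zo] by blast
  qed
qed

lemma L_zero_arr: "zero_arr C X Y f \<Longrightarrow> zero_arr D (fob L X) (fob L Y) (farr L f)"
  using functor_zero_arr[OF D.is_cat L L_zero_ob] .

lemma R_zero_arr: "zero_arr D X Y f \<Longrightarrow> zero_arr C (fob R X) (fob R Y) (farr R f)"
  using functor_zero_arr[OF C.is_cat R R_zero_ob] .

end

section \<open>Recollements with exact \<open>i\<^sup>*\<close> and \<open>i\<^sup>!\<close>\<close>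

text \<open>
  \<open>iu, il, ish, js, ju, jl\<close> stand for \<open>i\<^sup>*, i\<^sub>*, i\<^sup>!, j\<^sub>!, j\<^sup>*, j\<^sub>*\<close>.
\<close>

locale exact_recollement =
  A: abcat A + B: abcat B + C: abcat C +
  a1: adj_ab A B iu il \<eta>i \<epsilon>i + a2: adj_ab B A il ish ui \<alpha> +
  a3: adj_ab C A js ju \<eta>j \<epsilon>j + a4: adj_ab A C ju jl \<mu> \<nu>
  for A :: "('oa,'aa) category" and B :: "('ob,'ab) category" and C :: "('oc,'ac) category"
    and iu il ish js ju jl \<eta>i \<epsilon>i ui \<alpha> \<eta>j \<epsilon>j \<mu> \<nu> +
  assumes ff_il: "fully_faithful B A il" and ff_js: "fully_faithful C A js"
    and ff_jl: "fully_faithful C A jl"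
    and il_image_ju_kernel:
      "\<forall>X \<in> cat_ob A. (\<exists>Y \<in> cat_ob B. isomorphic_ob A X (fob il Y)) \<longleftrightarrow> zero_ob C (fob ju X)"
    and exact_iu: "exact_functor A B iu" and exact_ish: "exact_functor A B ish"
begin

lemma ju_il_zero: assumes Y: "Y \<in> cat_ob B" shows "zero_ob C (fob ju (fob il Y))"
proof -
  have "isomorphic_ob A (fob il Y) (fob il Y)" unfolding isomorphic_ob_def using A.iso_id[OF a1.Rob[OF Y]] by blast
  then show ?thesis using il_image_ju_kernel a1.Rob[OF Y] Y by blast
qed

lemma iso_il_if_ju_zero: assumes X: "X \<in> cat_ob A" and Z: "zero_ob C (fob ju X)"
  shows "\<exists>Y\<in>cat_ob B. \<exists>f. is_iso A X (fob il Y) f"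
  using il_image_ju_kernel X Z unfolding isomorphic_ob_def by blast

lemma hom_js_il_unique: assumes Z: "Z \<in> cat_ob C" and W: "W \<in> cat_ob B"
  shows "\<exists>!g. g \<in> cat_hom A (fob js Z) (fob il W)"
proof -
  have ilW: "fob il W \<in> cat_ob A" using a1.Rob[OF W] .
  have "\<exists>!f. f \<in> cat_hom C Z (fob ju (fob il W))" using ju_il_zero[OF W] Z unfolding zero_ob_def by blast
  then show ?thesis using a3.unique_hom_L[OF Z ilW] by blast
qed

lemma hom_js_il_zero_arr: assumes Z: "Z \<in> cat_ob C" and W: "W \<in> cat_ob B" and h: "h \<in> cat_hom A (fob js Z) (fob il W)"
  shows "zero_arr A (fob js Z) (fob il W) h"
proof -
  have jsZ: "fob js Z \<in> cat_ob A" and ilW: "fob il W \<in> cat_ob A" using A.hom_obs[OF h] by auto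
  obtain z where z: "zero_arr A (fob js Z) (fob il W) z" using A.zero_arr_ex[OF jsZ ilW] by blast
  have "h = z" using hom_js_il_unique[OF Z W] h A.zero_arr_hom[OF z] by (rule ex1_unique)
  then show ?thesis using z by simp
qed

lemma iu_js_zero: assumes Z: "Z \<in> cat_ob C" shows "zero_ob B (fob iu (fob js Z))"
proof (rule B.initial_is_zero_ob)
  have jsZ: "fob js Z \<in> cat_ob A" using a3.Lob[OF Z] .
  show "fob iu (fob js Z) \<in> cat_ob B" using a1.Lob[OF jsZ] .
  show "\<forall>W\<in>cat_ob B. \<exists>!f. f \<in> cat_hom B (fob iu (fob js Z)) W"
    using a1.unique_hom_L[OF jsZ _ hom_js_il_unique[OF Z]] by blast
qed

lemma ish_jl_zero: assumes Z: "Z \<in> cat_ob C" shows "zero_ob B (fob ish (fob jl Z))"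
proof (rule B.terminal_is_zero_ob)
  have jlZ: "fob jl Z \<in> cat_ob A" using a4.Rob[OF Z] .
  show "fob ish (fob jl Z) \<in> cat_ob B" using a2.Rob[OF jlZ] .
  show "\<forall>W\<in>cat_ob B. \<exists>!f. f \<in> cat_hom B W (fob ish (fob jl Z))"
  proof
    fix W assume W: "W \<in> cat_ob B"
    have ilW: "fob il W \<in> cat_ob A" using a1.Rob[OF W] .
    have "\<exists>!f. f \<in> cat_hom C (fob ju (fob il W)) Z" using ju_il_zero[OF W] Z unfolding zero_ob_def by blast
    then have "\<exists>!g. g \<in> cat_hom A (fob il W) (fob jl Z)" using a4.unique_hom_R[OF ilW Z] by blast
    then show "\<exists>!f. f \<in> cat_hom B W (fob ish (fob jl Z))" using a2.unique_hom_R[OF W jlZ] by blast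
  qed
qed

lemma epsi_iso: "Y \<in> cat_ob B \<Longrightarrow> is_iso B (fob iu (fob il Y)) Y (\<epsilon>i Y)"
  using a1.counit_iso_if_R_ff[OF ff_il] .

lemma ui_iso: "Y \<in> cat_ob B \<Longrightarrow> is_iso B Y (fob ish (fob il Y)) (ui Y)"
  using a2.unit_iso_if_L_ff[OF ff_il] .

lemma etaj_iso: "Z \<in> cat_ob C \<Longrightarrow> is_iso C Z (fob ju (fob js Z)) (\<eta>j Z)"
  using a3.unit_iso_if_L_ff[OF ff_js] .

lemma nu_iso: "Z \<in> cat_ob C \<Longrightarrow> is_iso C (fob ju (fob jl Z)) Z (\<nu> Z)"
  using a4.counit_iso_if_R_ff[OF ff_jl] .

lemma ju_epsj_iso: assumes X: "X \<in> cat_ob A" shows "is_iso C (fob ju (fob js (fob ju X))) (fob ju X) (farr ju (\<epsilon>j X))"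
proof (rule C.iso_cancel_right[OF etaj_iso[OF a3.Rob[OF X]] a3.Rhom[OF a3.eps_hom[OF X]]])
  show "is_iso C (fob ju X) (fob ju X) (cat_comp C (farr ju (\<epsilon>j X)) (\<eta>j (fob ju X)))"
    using a3.tri2[OF X] C.iso_id[OF a3.Rob[OF X]] by simp
qed

lemma ish_alpha_iso: assumes X: "X \<in> cat_ob A" shows "is_iso B (fob ish (fob il (fob ish X))) (fob ish X) (farr ish (\<alpha> X))"
proof (rule B.iso_cancel_right[OF ui_iso[OF a2.Rob[OF X]] a2.Rhom[OF a2.eps_hom[OF X]]])
  show "is_iso B (fob ish X) (fob ish X) (cat_comp B (farr ish (\<alpha> X)) (ui (fob ish X)))"
    using a2.tri2[OF X] B.iso_id[OF a2.Rob[OF X]] by simp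
qed

lemma ju_mu_iso: assumes X: "X \<in> cat_ob A" shows "is_iso C (fob ju X) (fob ju (fob jl (fob ju X))) (farr ju (\<mu> X))"
proof (rule C.iso_cancel_left[OF nu_iso[OF a4.Lob[OF X]] a4.Lhom[OF a4.eta_hom[OF X]]])
  show "is_iso C (fob ju X) (fob ju X) (cat_comp C (\<nu> (fob ju X)) (farr ju (\<mu> X)))"
    using a4.tri1[OF X] C.iso_id[OF a4.Lob[OF X]] by simp
qed

lemma alpha_iso_if_ju_zero: assumes Q: "Q \<in> cat_ob A" and Z: "zero_ob C (fob ju Q)"
  shows "is_iso A (fob il (fob ish Q)) Q (\<alpha> Q)"
proof -
  obtain Y f where Y: "Y \<in> cat_ob B" and f: "is_iso A Q (fob il Y) f" using iso_il_if_ju_zero[OF Q Z] by blast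
  have fh: "f \<in> cat_hom A Q (fob il Y)" using A.iso_hom[OF f] .
  have ilY: "fob il Y \<in> cat_ob A" using a1.Rob[OF Y] .
  have a1': "is_iso A (fob il Y) (fob il (fob ish (fob il Y))) (farr il (ui Y))"
    using functor_iso[OF B.is_cat a2.L ui_iso[OF Y]] .
  have aY: "is_iso A (fob il (fob ish (fob il Y))) (fob il Y) (\<alpha> (fob il Y))"
  proof (rule A.iso_cancel_right[OF a1' a2.eps_hom[OF ilY]])
    show "is_iso A (fob il Y) (fob il Y) (cat_comp A (\<alpha> (fob il Y)) (farr il (ui Y)))"
      using a2.tri1[OF Y] A.iso_id[OF ilY] by simp
  qed
  have ff: "is_iso A (fob il (fob ish Q)) (fob il (fob ish (fob il Y))) (farr il (farr ish f))"
    using functor_iso[OF B.is_cat a2.L functor_iso[OF A.is_cat a2.R f]] .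
  have "is_iso A (fob il (fob ish Q)) (fob il Y) (cat_comp A f (\<alpha> Q))"
    using a2.eps_nat[OF fh] A.iso_comp[OF ff aY] by simp
  then show ?thesis using A.iso_cancel_left[OF f a2.eps_hom[OF Q]] by blast
qed

lemma alpha_mono: assumes X: "X \<in> cat_ob A" shows "is_mono A (fob il (fob ish X)) X (\<alpha> X)"
proof -
  have ah: "\<alpha> X \<in> cat_hom A (fob il (fob ish X)) X" using a2.eps_hom[OF X] .
  obtain K k where k: "is_kernel A (fob il (fob ish X)) X (\<alpha> X) K k" using A.kernel_ex[OF ah] by blast
  have kh: "k \<in> cat_hom A K (fob il (fob ish X))" using A.kernelD(2)[OF k] .
  have km: "is_mono A K (fob il (fob ish X)) k" using A.kernel_mono[OF k] .
  have Ko: "K \<in> cat_ob A" using A.hom_dom_ob[OF kh] .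
  have ishX: "fob ish X \<in> cat_ob B" using a2.Rob[OF X] .
  have "zero_arr C (fob ju K) (fob ju (fob il (fob ish X))) (farr ju k)"
    using C.zero_arr_to_zero_ob[OF ju_il_zero[OF ishX] a3.Rhom[OF kh]] .
  then have juK: "zero_ob C (fob ju K)" using C.zero_ob_if_mono_zero_arr[OF a3.R_mono[OF km]] by blast
  obtain Y f where Y: "Y \<in> cat_ob B" and f: "is_iso A K (fob il Y) f" using iso_il_if_ju_zero[OF Ko juK] by blast
  have "zero_arr B (fob ish K) (fob ish X) (farr ish (cat_comp A (\<alpha> X) k))" using a2.R_zero_arr[OF A.kernelD(3)[OF k]] .
  then have "zero_arr B (fob ish K) (fob ish X) (cat_comp B (farr ish (\<alpha> X)) (farr ish k))"
    using a2.Rcomp[OF kh ah] by simp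
  then have "zero_arr B (fob ish K) (fob ish (fob il (fob ish X))) (farr ish k)"
    using B.zero_arr_iso_cancel_left[OF ish_alpha_iso[OF X] a2.Rhom[OF kh]] by blast
  then have ishK: "zero_ob B (fob ish K)" using B.zero_ob_if_mono_zero_arr[OF a2.R_mono[OF km]] by blast
  have "is_iso B (fob ish K) (fob ish (fob il Y)) (farr ish f)" using functor_iso[OF A.is_cat a2.R f] .
  then have "zero_ob B (fob ish (fob il Y))" using B.zero_ob_iso_cod ishK by blast
  then have "zero_ob B Y" using B.zero_ob_iso_dom[OF ui_iso[OF Y]] by blast
  then have "zero_ob A (fob il Y)" using a1.R_zero_ob by blast
  then have "zero_ob A K" using A.zero_ob_iso_dom[OF f] by blast
  then show ?thesis using A.mono_if_kernel_zero_ob[OF ah k] by blast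
qed

lemma zero_arr_if_kills_alpha_epsj: assumes X: "X \<in> cat_ob A" and h: "h \<in> cat_hom A X W"
  and z1: "zero_arr A (fob il (fob ish X)) W (cat_comp A h (\<alpha> X))"
  and z2: "zero_arr A (fob js (fob ju X)) W (cat_comp A h (\<epsilon>j X))"
  shows "zero_arr A X W h"
proof -
  have eh: "\<epsilon>j X \<in> cat_hom A (fob js (fob ju X)) X" using a3.eps_hom[OF X] .
  have ah: "\<alpha> X \<in> cat_hom A (fob il (fob ish X)) X" using a2.eps_hom[OF X] .
  obtain Q c where c: "is_cokernel A (fob js (fob ju X)) X (\<epsilon>j X) Q c" using A.cokernel_ex[OF eh] by blast
  have ch: "c \<in> cat_hom A X Q" using A.cokernelD(2)[OF c] .
  have ce: "is_epi A X Q c" using A.cokernel_epi[OF c] .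
  have Qo: "Q \<in> cat_ob A" using A.hom_cod_ob[OF ch] .
  obtain h' where h': "h' \<in> cat_hom A Q W" "cat_comp A h' c = h" using A.cokernel_factor[OF c h z2] by blast
  have "zero_arr C (fob ju (fob js (fob ju X))) (fob ju Q) (farr ju (cat_comp A c (\<epsilon>j X)))"
    using a4.L_zero_arr[OF A.cokernelD(3)[OF c]] .
  then have "zero_arr C (fob ju (fob js (fob ju X))) (fob ju Q) (cat_comp C (farr ju c) (farr ju (\<epsilon>j X)))"
    using a3.Rcomp[OF eh ch] by simp
  then have "zero_arr C (fob ju X) (fob ju Q) (farr ju c)"
    using C.zero_arr_iso_cancel_right[OF ju_epsj_iso[OF X] a3.Rhom[OF ch]] by blast
  then have juQ: "zero_ob C (fob ju Q)" using C.zero_ob_if_epi_zero_arr[OF a4.L_epi[OF ce]] by blast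
  have aQ: "is_iso A (fob il (fob ish Q)) Q (\<alpha> Q)" using alpha_iso_if_ju_zero[OF Qo juQ] .
  have ishc: "is_epi B (fob ish X) (fob ish Q) (farr ish c)" using exact_functor_epi[OF A.abel B.is_cat exact_ish ce] .
  have "is_epi A (fob il (fob ish X)) Q (cat_comp A (\<alpha> Q) (farr il (farr ish c)))"
    using A.epi_comp[OF a2.L_epi[OF ishc] A.iso_epi[OF aQ]] .
  then have cae: "is_epi A (fob il (fob ish X)) Q (cat_comp A c (\<alpha> X))" using a2.eps_nat[OF ch] by simp
  have "cat_comp A h' (cat_comp A c (\<alpha> X)) = cat_comp A h (\<alpha> X)" using A.assoc[OF ah ch h'(1)] h'(2) by simp
  then have "zero_arr A Q W h'" using A.zero_arr_epi_cancel[OF cae h'(1)] z1 by simp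
  then show ?thesis using A.zero_arr_comp_right[OF _ ch] h'(2) by blast
qed

lemma iu_jl_zero: assumes Z: "Z \<in> cat_ob C" shows "zero_ob B (fob iu (fob jl Z))"
proof (rule B.initial_is_zero_ob)
  have jlZ: "fob jl Z \<in> cat_ob A" using a4.Rob[OF Z] .
  show "fob iu (fob jl Z) \<in> cat_ob B" using a1.Lob[OF jlZ] .
  show "\<forall>W\<in>cat_ob B. \<exists>!f. f \<in> cat_hom B (fob iu (fob jl Z)) W"
  proof
    fix W assume W: "W \<in> cat_ob B"
    have ilW: "fob il W \<in> cat_ob A" using a1.Rob[OF W] .
    obtain z where z: "zero_arr A (fob jl Z) (fob il W) z" using A.zero_arr_ex[OF jlZ ilW] by blast
    have allz: "zero_arr A (fob jl Z) (fob il W) h" if h: "h \<in> cat_hom A (fob jl Z) (fob il W)" for h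
    proof (rule zero_arr_if_kills_alpha_epsj[OF jlZ h])
      show "zero_arr A (fob il (fob ish (fob jl Z))) (fob il W) (cat_comp A h (\<alpha> (fob jl Z)))"
        using A.zero_arr_from_zero_ob[OF a1.R_zero_ob[OF ish_jl_zero[OF Z]] A.comp_hom[OF a2.eps_hom[OF jlZ] h]] .
      show "zero_arr A (fob js (fob ju (fob jl Z))) (fob il W) (cat_comp A h (\<epsilon>j (fob jl Z)))"
        using hom_js_il_zero_arr[OF a4.Lob[OF jlZ] W A.comp_hom[OF a3.eps_hom[OF jlZ] h]] .
    qed
    have "\<exists>!g. g \<in> cat_hom A (fob jl Z) (fob il W)"
    proof (rule ex1I[of _ z])
      show "z \<in> cat_hom A (fob jl Z) (fob il W)" using A.zero_arr_hom[OF z] .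
      fix g assume "g \<in> cat_hom A (fob jl Z) (fob il W)"
      then show "g = z" using A.zero_arr_unique[OF allz z] by blast
    qed
    then show "\<exists>!f. f \<in> cat_hom B (fob iu (fob jl Z)) W" using a1.unique_hom_L[OF jlZ W] by blast
  qed
qed

subsection \<open>The comparison \<open>i\<^sup>! \<cong> i\<^sup>*\<close>\<close>

lemma mu_mono_if_ish_zero: assumes Q: "Q \<in> cat_ob A" and Z: "zero_ob B (fob ish Q)"
  shows "is_mono A Q (fob jl (fob ju Q)) (\<mu> Q)"
proof -
  have mh: "\<mu> Q \<in> cat_hom A Q (fob jl (fob ju Q))" using a4.eta_hom[OF Q] .
  obtain K k where k: "is_kernel A Q (fob jl (fob ju Q)) (\<mu> Q) K k" using A.kernel_ex[OF mh] by blast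
  have kh: "k \<in> cat_hom A K Q" using A.kernelD(2)[OF k] .
  have km: "is_mono A K Q k" using A.kernel_mono[OF k] .
  have Ko: "K \<in> cat_ob A" using A.hom_dom_ob[OF kh] .
  have "zero_arr C (fob ju K) (fob ju (fob jl (fob ju Q))) (farr ju (cat_comp A (\<mu> Q) k))" using a4.L_zero_arr[OF A.kernelD(3)[OF k]] .
  then have "zero_arr C (fob ju K) (fob ju (fob jl (fob ju Q))) (cat_comp C (farr ju (\<mu> Q)) (farr ju k))"
    using a3.Rcomp[OF kh mh] by simp
  then have "zero_arr C (fob ju K) (fob ju Q) (farr ju k)"
    using C.zero_arr_iso_cancel_left[OF ju_mu_iso[OF Q] a3.Rhom[OF kh]] by blast
  then have juK: "zero_ob C (fob ju K)" using C.zero_ob_if_mono_zero_arr[OF a3.R_mono[OF km]] by blast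
  obtain Y f where Y: "Y \<in> cat_ob B" and f: "is_iso A K (fob il Y) f" using iso_il_if_ju_zero[OF Ko juK] by blast
  define fi where "fi = A.inv_arr K (fob il Y) f"
  have fi: "fi \<in> cat_hom A (fob il Y) K" "cat_comp A fi f = cat_id A K" using A.inv_arr[OF f] fi_def by auto
  have fh: "f \<in> cat_hom A K (fob il Y)" using A.iso_hom[OF f] .
  have ilY: "fob il Y \<in> cat_ob A" using a1.Rob[OF Y] .
  have "\<exists>!g. g \<in> cat_hom B Y (fob ish Q)" using Z Y unfolding zero_ob_def by blast
  then have s: "\<exists>!g. g \<in> cat_hom A (fob il Y) Q" using a2.unique_hom_L[OF Y Q] by blast
  obtain z where z: "zero_arr A (fob il Y) Q z" using A.zero_arr_ex[OF ilY Q] by blast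
  have "cat_comp A k fi = z" using s A.comp_hom[OF fi(1) kh] A.zero_arr_hom[OF z] by (rule ex1_unique)
  then have "zero_arr A (fob il Y) Q (cat_comp A k fi)" using z by simp
  then have "zero_arr A K Q (cat_comp A (cat_comp A k fi) f)" using A.zero_arr_comp_right[OF _ fh] by blast
  then have "zero_arr A K Q k" using A.assoc[OF fh fi(1) kh] fi(2) kh by simp
  then have "zero_ob A K" using A.zero_ob_if_mono_zero_arr[OF km] by blast
  then show ?thesis using A.mono_if_kernel_zero_ob[OF mh k] by blast
qed

lemma iu_cokernel_alpha_zero:
  assumes X: "X \<in> cat_ob A" and c: "is_cokernel A (fob il (fob ish X)) X (\<alpha> X) Q c"
  shows "zero_ob B (fob iu Q)"
proof -
  have ah: "\<alpha> X \<in> cat_hom A (fob il (fob ish X)) X" using a2.eps_hom[OF X] .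
  have ch: "c \<in> cat_hom A X Q" using A.cokernelD(2)[OF c] .
  have ce: "is_epi A X Q c" using A.cokernel_epi[OF c] .
  have Qo: "Q \<in> cat_ob A" using A.hom_cod_ob[OF ch] .
  have "zero_arr B (fob ish (fob il (fob ish X))) (fob ish Q) (farr ish (cat_comp A c (\<alpha> X)))"
    using a2.R_zero_arr[OF A.cokernelD(3)[OF c]] .
  then have "zero_arr B (fob ish (fob il (fob ish X))) (fob ish Q) (cat_comp B (farr ish c) (farr ish (\<alpha> X)))"
    using a2.Rcomp[OF ah ch] by simp
  then have "zero_arr B (fob ish X) (fob ish Q) (farr ish c)"
    using B.zero_arr_iso_cancel_right[OF ish_alpha_iso[OF X] a2.Rhom[OF ch]] by blast
  then have ishQ: "zero_ob B (fob ish Q)" using B.zero_ob_if_epi_zero_arr[OF exact_functor_epi[OF A.abel B.is_cat exact_ish ce]] by blast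
  have im: "is_mono B (fob iu Q) (fob iu (fob jl (fob ju Q))) (farr iu (\<mu> Q))"
    using exact_functor_mono[OF A.abel B.is_cat exact_iu mu_mono_if_ish_zero[OF Qo ishQ]] .
  have "zero_arr B (fob iu Q) (fob iu (fob jl (fob ju Q))) (farr iu (\<mu> Q))"
    using B.zero_arr_to_zero_ob[OF iu_jl_zero[OF a4.Lob[OF Qo]] B.mono_hom[OF im]] .
  then show ?thesis using B.zero_ob_if_mono_zero_arr[OF im] by blast
qed

lemma iu_alpha_epi: assumes X: "X \<in> cat_ob A"
  shows "is_epi B (fob iu (fob il (fob ish X))) (fob iu X) (farr iu (\<alpha> X))"
proof (rule B.epi_if_cokernel_trivial[OF a1.Lhom[OF a2.eps_hom[OF X]]])
  have ah: "\<alpha> X \<in> cat_hom A (fob il (fob ish X)) X" using a2.eps_hom[OF X] .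
  obtain Q c where c: "is_cokernel A (fob il (fob ish X)) X (\<alpha> X) Q c" using A.cokernel_ex[OF ah] by blast
  have ch: "c \<in> cat_hom A X Q" using A.cokernelD(2)[OF c] .
  have Qo: "Q \<in> cat_ob A" using A.hom_cod_ob[OF ch] .
  note iuQ = iu_cokernel_alpha_zero[OF X c]
  \<comment> \<open>the transpose of \<open>g\<close> kills \<open>\<alpha>\<^sub>X\<close>, so it factors through \<open>Q\<close>, and \<open>i\<^sup>* Q = 0\<close>\<close>
  fix W g assume g: "g \<in> cat_hom B (fob iu X) W"
    and z: "zero_arr B (fob iu (fob il (fob ish X))) W (cat_comp B g (farr iu (\<alpha> X)))"
  have W: "W \<in> cat_ob B" using B.hom_cod_ob[OF g] .
  have ilW: "fob il W \<in> cat_ob A" using a1.Rob[OF W] .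
  define gb where "gb = cat_comp A (farr il g) (\<eta>i X)"
  have gbh: "gb \<in> cat_hom A X (fob il W)" using a1.transpose_hom[OF g X] gb_def by simp
  have "cat_comp A gb (\<alpha> X) = cat_comp A (farr il (cat_comp B g (farr iu (\<alpha> X)))) (\<eta>i (fob il (fob ish X)))"
    using a1.transpose_precomp[OF g ah] gb_def by simp
  moreover have "zero_arr A (fob il (fob ish X)) (fob il W) \<dots>"
    using A.zero_arr_comp_right[OF a1.R_zero_arr[OF z] a1.eta_hom[OF a2.Lob[OF a2.Rob[OF X]]]] .
  ultimately have "zero_arr A (fob il (fob ish X)) (fob il W) (cat_comp A gb (\<alpha> X))" by simp
  then obtain g' where g': "g' \<in> cat_hom A Q (fob il W)" "cat_comp A g' c = gb" using A.cokernel_factor[OF c gbh] by blast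
  have "\<exists>!f. f \<in> cat_hom B (fob iu Q) W" using iuQ W unfolding zero_ob_def by blast
  then have s: "\<exists>!f. f \<in> cat_hom A Q (fob il W)" using a1.unique_hom_R[OF Qo W] by blast
  obtain z0 where z0: "zero_arr A Q (fob il W) z0" using A.zero_arr_ex[OF Qo ilW] by blast
  have "g' = z0" using s g'(1) A.zero_arr_hom[OF z0] by (rule ex1_unique)
  then have "zero_arr A X (fob il W) gb" using A.zero_arr_comp_right[OF z0 ch] g'(2) by simp
  then have "zero_arr B (fob iu X) W (cat_comp B (\<epsilon>i W) (farr iu gb))"
    using B.zero_arr_comp_left[OF a1.L_zero_arr a1.eps_hom[OF W]] by blast
  then show "zero_arr B (fob iu X) W g" using a1.cotranspose_transpose[OF g X] gb_def by simp
qed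

lemma iu_alpha_iso: "X \<in> cat_ob A \<Longrightarrow> is_iso B (fob iu (fob il (fob ish X))) (fob iu X) (farr iu (\<alpha> X))"
  using B.mono_epi_is_iso exact_functor_mono[OF A.abel B.is_cat exact_iu alpha_mono] iu_alpha_epi by blast

definition \<theta> :: "'oa \<Rightarrow> 'ab" where
  "\<theta> X = cat_comp B (farr iu (\<alpha> X)) (B.inv_arr (fob iu (fob il (fob ish X))) (fob ish X) (\<epsilon>i (fob ish X)))"

lemma \<theta>_iso: "X \<in> cat_ob A \<Longrightarrow> is_iso B (fob ish X) (fob iu X) (\<theta> X)"
  unfolding \<theta>_def using B.iso_comp[OF B.inv_arr(1)[OF epsi_iso[OF a2.Rob]] iu_alpha_iso] .

lemma \<theta>_nat_iso: "nat_iso A B ish iu \<theta>"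
proof (rule nat_isoI[OF _ \<theta>_iso])
  have "nat_iso B B (fcomp iu il) (id_functor B) \<epsilon>i"
    using nat_isoI[OF a1.eps] epsi_iso by simp
  from nat_iso_sym[OF B.is_cat B.is_cat this]
  have \<epsilon>i_inv: "nat_trans B B (id_functor B) (fcomp iu il) (\<lambda>Y. B.inv_arr (fob iu (fob il Y)) Y (\<epsilon>i Y))"
    unfolding nat_iso_def by simp
  have "nat_trans A B ish (fcomp iu (fcomp il ish))
      (\<lambda>X. B.inv_arr (fob iu (fob il (fob ish X))) (fob ish X) (\<epsilon>i (fob ish X)))"
    using nat_trans_whisker_right[OF \<epsilon>i_inv a2.R] by (simp add: fcomp_assoc fcomp_id_left)
  moreover have "nat_trans A B (fcomp iu (fcomp il ish)) iu (\<lambda>X. farr iu (\<alpha> X))"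
    using nat_trans_whisker_left[OF A.is_cat a2.eps a1.L] by (simp add: fcomp_id_right)
  ultimately show "nat_trans A B ish iu \<theta>"
    unfolding \<theta>_def[abs_def] by (rule nat_trans_vcomp[OF A.is_cat B.is_cat])
qed

lemma \<theta>_natural: "f \<in> cat_hom A X X' \<Longrightarrow> cat_comp B (farr iu f) (\<theta> X) = cat_comp B (\<theta> X') (farr ish f)"
  by (rule nat_transD(4)[OF conjunct1[OF \<theta>_nat_iso[unfolded nat_iso_def]]])

lemma ish_eq_if_iu_eq: assumes f: "f \<in> cat_hom A X X'" and g: "g \<in> cat_hom A X X'"
  and e: "farr iu f = farr iu g" shows "farr ish f = farr ish g"
proof -
  have X': "X' \<in> cat_ob A" using A.hom_cod_ob[OF f] .
  have "cat_comp B (\<theta> X') (farr ish f) = cat_comp B (\<theta> X') (farr ish g)"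
    using \<theta>_natural[OF f] \<theta>_natural[OF g] e by simp
  then show ?thesis using B.mono_cancel[OF B.iso_mono[OF \<theta>_iso[OF X']] a2.Rhom[OF f] a2.Rhom[OF g]] by blast
qed

lemma alpha_epsj_jointly_epi: assumes X: "X \<in> cat_ob A"
  and u: "u \<in> cat_hom A X W" and v: "v \<in> cat_hom A X W"
  and e1: "cat_comp A u (\<alpha> X) = cat_comp A v (\<alpha> X)" and e2: "cat_comp A u (\<epsilon>j X) = cat_comp A v (\<epsilon>j X)"
  shows "u = v"
  by (rule A.jointly_epi_if_trivial[OF a2.eps_hom[OF X] a3.eps_hom[OF X]
      zero_arr_if_kills_alpha_epsj[OF X] u v e1 e2])

lemma iu_ju_faithful: assumes f: "f \<in> cat_hom A X X'" and g: "g \<in> cat_hom A X X'"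
  and e1: "farr iu f = farr iu g" and e2: "farr ju f = farr ju g"
  shows "f = g"
proof (rule alpha_epsj_jointly_epi[OF A.hom_dom_ob[OF f] f g])
  show "cat_comp A f (\<alpha> X) = cat_comp A g (\<alpha> X)"
    using a2.eps_nat[OF f] a2.eps_nat[OF g] ish_eq_if_iu_eq[OF f g e1] by simp
  show "cat_comp A f (\<epsilon>j X) = cat_comp A g (\<epsilon>j X)"
    using a3.eps_nat[OF f] a3.eps_nat[OF g] e2 by simp
qed

lemma mono_if_iu_ju_iso:
  assumes p: "p \<in> cat_hom A S X" and iup: "is_iso B (fob iu S) (fob iu X) (farr iu p)"
    and jup: "is_iso C (fob ju S) (fob ju X) (farr ju p)"
  shows "is_mono A S X p"
  unfolding is_mono_def
proof (intro conjI allI impI p)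
  fix W g h assume g: "g \<in> cat_hom A W S" and h: "h \<in> cat_hom A W S" and e: "cat_comp A p g = cat_comp A p h"
  have "cat_comp B (farr iu p) (farr iu g) = cat_comp B (farr iu p) (farr iu h)"
    using e a1.Lcomp[OF g p] a1.Lcomp[OF h p] by simp
  then have 1: "farr iu g = farr iu h" by (rule B.mono_cancel[OF B.iso_mono[OF iup] a1.Lhom[OF g] a1.Lhom[OF h]])
  have "cat_comp C (farr ju p) (farr ju g) = cat_comp C (farr ju p) (farr ju h)"
    using e a4.Lcomp[OF g p] a4.Lcomp[OF h p] by simp
  then have 2: "farr ju g = farr ju h" by (rule C.mono_cancel[OF C.iso_mono[OF jup] a4.Lhom[OF g] a4.Lhom[OF h]])
  show "g = h" using iu_ju_faithful[OF g h 1 2] .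
qed

lemma coproduct_comparison_iso:
  assumes X: "X \<in> cat_ob A" and S: "is_coproduct A (fob il (fob ish X)) (fob js (fob ju X)) S a b"
    and p: "p \<in> cat_hom A S X" "cat_comp A p a = \<alpha> X" "cat_comp A p b = \<epsilon>j X"
  shows "is_iso A S X p"
proof (rule A.mono_epi_is_iso)
  have ah: "a \<in> cat_hom A (fob il (fob ish X)) S" and bh: "b \<in> cat_hom A (fob js (fob ju X)) S"
    using A.coproductD[OF S] by auto
  show "is_epi A S X p" unfolding is_epi_def
  proof (intro conjI allI impI p(1))
    fix W u v assume u: "u \<in> cat_hom A X W" and v: "v \<in> cat_hom A X W" and e: "cat_comp A u p = cat_comp A v p"
    show "u = v"
    proof (rule alpha_epsj_jointly_epi[OF X u v])
      show "cat_comp A u (\<alpha> X) = cat_comp A v (\<alpha> X)"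
        using A.assoc[OF ah p(1) u] A.assoc[OF ah p(1) v] e p(2) by simp
      show "cat_comp A u (\<epsilon>j X) = cat_comp A v (\<epsilon>j X)"
        using A.assoc[OF bh p(1) u] A.assoc[OF bh p(1) v] e p(3) by simp
    qed
  qed
  have "is_iso B (fob iu (fob il (fob ish X))) (fob iu S) (farr iu a)"
    using B.coproduct_zero_right_iso[OF a1.L_preserves_coproduct[OF S] iu_js_zero[OF a4.Lob[OF X]]] .
  then have iup: "is_iso B (fob iu S) (fob iu X) (farr iu p)"
    using B.iso_cancel_right[OF _ a1.Lhom[OF p(1)]] iu_alpha_iso[OF X] a1.Lcomp[OF ah p(1)] p(2) by simp
  have "is_iso C (fob ju (fob js (fob ju X))) (fob ju S) (farr ju b)"
    using C.coproduct_zero_left_iso[OF a4.L_preserves_coproduct[OF S] ju_il_zero[OF a2.Rob[OF X]]] .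
  then have jup: "is_iso C (fob ju S) (fob ju X) (farr ju p)"
    using C.iso_cancel_right[OF _ a4.Lhom[OF p(1)]] ju_epsj_iso[OF X] a4.Lcomp[OF bh p(1)] p(3) by simp
  show "is_mono A S X p" using mono_if_iu_ju_iso[OF p(1) iup jup] .
qed

lemma coproduct_decomposition: assumes X: "X \<in> cat_ob A"
  shows "is_coproduct A (fob il (fob ish X)) (fob js (fob ju X)) X (\<alpha> X) (\<epsilon>j X)"
proof -
  have ah: "\<alpha> X \<in> cat_hom A (fob il (fob ish X)) X" and eh: "\<epsilon>j X \<in> cat_hom A (fob js (fob ju X)) X"
    using a2.eps_hom[OF X] a3.eps_hom[OF X] .
  obtain S a b where S: "is_coproduct A (fob il (fob ish X)) (fob js (fob ju X)) S a b"
    using A.has_coproduct[OF A.hom_dom_ob[OF ah] A.hom_dom_ob[OF eh]] by blast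
  obtain p where p: "p \<in> cat_hom A S X" "cat_comp A p a = \<alpha> X" "cat_comp A p b = \<epsilon>j X"
    using A.coproduct_ex[OF S ah eh] by blast
  show ?thesis using A.coproduct_iso_transport[OF S coproduct_comparison_iso[OF X S p]] p(2,3) by simp
qed

subsection \<open>The equivalence \<open>\<A> \<simeq> \<B> \<times> \<C>\<close>\<close>

lemma iu_ju_full:
  assumes X: "X \<in> cat_ob A" and X': "X' \<in> cat_ob A"
    and b: "b \<in> cat_hom B (fob iu X) (fob iu X')" and c: "c \<in> cat_hom C (fob ju X) (fob ju X')"
  shows "\<exists>f \<in> cat_hom A X X'. farr iu f = b \<and> farr ju f = c"
proof -
  define ti where "ti = B.inv_arr (fob ish X') (fob iu X') (\<theta> X')"
  have \<theta>h: "\<theta> X \<in> cat_hom B (fob ish X) (fob iu X)" using B.iso_hom[OF \<theta>_iso[OF X]] .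
  have ti: "ti \<in> cat_hom B (fob iu X') (fob ish X')" "cat_comp B (\<theta> X') ti = cat_id B (fob iu X')"
    using B.inv_arr[OF \<theta>_iso[OF X']] ti_def by auto
  define k where "k = cat_comp B ti (cat_comp B b (\<theta> X))"
  have kh: "k \<in> cat_hom B (fob ish X) (fob ish X')" using k_def ti \<theta>h b by blast
  obtain f where f: "f \<in> cat_hom A X X'" "cat_comp A f (\<alpha> X) = cat_comp A (\<alpha> X') (farr il k)"
    "cat_comp A f (\<epsilon>j X) = cat_comp A (\<epsilon>j X') (farr js c)"
    using A.coproduct_ex[OF coproduct_decomposition[OF X]] a2.Lhom[OF kh] a2.eps_hom[OF X']
      a3.Lhom[OF c] a3.eps_hom[OF X'] by blast
  have "cat_comp B (farr iu f) (\<theta> X) = cat_comp B (\<theta> X') k"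
    using \<theta>_natural[OF f(1)] a2.R_arr_eq_if_counit_square[OF f(1) kh f(2)] by simp
  also have "\<dots> = cat_comp B b (\<theta> X)"
    unfolding k_def using B.assoc[OF B.comp_hom[OF \<theta>h b] ti(1) B.iso_hom[OF \<theta>_iso[OF X']]]
      ti(2) B.comp_hom[OF \<theta>h b] by simp
  finally have "farr iu f = b"
    using B.epi_cancel[OF B.iso_epi[OF \<theta>_iso[OF X]] a1.Lhom[OF f(1)] b] by blast
  then show ?thesis using f(1) a3.R_arr_eq_if_counit_square[OF f(1) c f(3)] by blast
qed

lemma iu_ju_fully_faithful: "fully_faithful A (prod_cat B C) (pair_functor iu ju)"
  unfolding fully_faithful_def
proof (intro conjI ballI pair_functor_functor[OF a1.L a4.L])
  fix X X' assume X: "X \<in> cat_ob A" and X': "X' \<in> cat_ob A"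
  have "inj_on (farr (pair_functor iu ju)) (cat_hom A X X')"
    unfolding inj_on_def using iu_ju_faithful by simp
  moreover have "farr (pair_functor iu ju) ` cat_hom A X X' = cat_hom B (fob iu X) (fob iu X') \<times> cat_hom C (fob ju X) (fob ju X')"
    using iu_ju_full[OF X X'] a1.Lhom a4.Lhom by fastforce
  ultimately show "bij_betw (farr (pair_functor iu ju)) (cat_hom A X X')
      (cat_hom (prod_cat B C) (fob (pair_functor iu ju) X) (fob (pair_functor iu ju) X'))"
    unfolding bij_betw_def by (simp add: prod_cat_simps)
qed

lemma iu_ju_ess_surj: assumes P: "P \<in> cat_ob (prod_cat B C)"
  shows "\<exists>X \<in> cat_ob A. \<exists>f. is_iso (prod_cat B C) (fob (pair_functor iu ju) X) P f"
proof -
  obtain Y Z where P': "P = (Y,Z)" "Y \<in> cat_ob B" "Z \<in> cat_ob C" using P by (auto simp: prod_cat_simps)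
  obtain S a b where S: "is_coproduct A (fob il Y) (fob js Z) S a b"
    using A.has_coproduct[OF a1.Rob[OF P'(2)] a3.Lob[OF P'(3)]] by blast
  have iua: "is_iso B (fob iu (fob il Y)) (fob iu S) (farr iu a)"
    using B.coproduct_zero_right_iso[OF a1.L_preserves_coproduct[OF S] iu_js_zero[OF P'(3)]] .
  have jub: "is_iso C (fob ju (fob js Z)) (fob ju S) (farr ju b)"
    using C.coproduct_zero_left_iso[OF a4.L_preserves_coproduct[OF S] ju_il_zero[OF P'(2)]] .
  have 1: "is_iso B (fob iu S) Y (cat_comp B (\<epsilon>i Y) (B.inv_arr (fob iu (fob il Y)) (fob iu S) (farr iu a)))"
    using B.iso_comp[OF B.inv_arr(1)[OF iua] epsi_iso[OF P'(2)]] .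
  have 2: "is_iso C (fob ju S) Z (cat_comp C (C.inv_arr Z (fob ju (fob js Z)) (\<eta>j Z))
      (C.inv_arr (fob ju (fob js Z)) (fob ju S) (farr ju b)))"
    using C.iso_comp[OF C.inv_arr(1)[OF jub] C.inv_arr(1)[OF etaj_iso[OF P'(3)]]] .
  show ?thesis using iso_prod_cat[OF 1 2] A.coproductD(1)[OF S] P'(1) by force
qed

lemma equivalent_prod_cat: "equivalent_cat A (prod_cat B C)"
  using equivalent_cat_if_ff_ess_surj[OF A.is_cat is_category_prod_cat[OF B.is_cat C.is_cat]
      iu_ju_fully_faithful iu_ju_ess_surj] .

subsection \<open>The comparison \<open>j\<^sub>! \<cong> j\<^sub>*\<close>\<close>

definition \<kappa> :: "'oc \<Rightarrow> 'aa" where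
  "\<kappa> Z = cat_comp A (farr jl (C.inv_arr Z (fob ju (fob js Z)) (\<eta>j Z))) (\<mu> (fob js Z))"

lemma \<kappa>_nat_trans: "nat_trans C A js jl \<kappa>"
proof -
  have "nat_iso C C (id_functor C) (fcomp ju js) \<eta>j"
    using nat_isoI[OF a3.eta] etaj_iso by simp
  from nat_iso_sym[OF C.is_cat C.is_cat this]
  have \<eta>j_inv: "nat_trans C C (fcomp ju js) (id_functor C) (\<lambda>Z. C.inv_arr Z (fob ju (fob js Z)) (\<eta>j Z))"
    unfolding nat_iso_def by simp
  have "nat_trans C A js (fcomp jl (fcomp ju js)) (\<lambda>Z. \<mu> (fob js Z))"
    using nat_trans_whisker_right[OF a4.eta a3.L] by (simp add: fcomp_assoc fcomp_id_left)
  moreover have "nat_trans C A (fcomp jl (fcomp ju js)) jl (\<lambda>Z. farr jl (C.inv_arr Z (fob ju (fob js Z)) (\<eta>j Z)))"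
    using nat_trans_whisker_left[OF C.is_cat \<eta>j_inv a4.R] by (simp add: fcomp_id_right)
  ultimately show ?thesis
    unfolding \<kappa>_def[abs_def] by (rule nat_trans_vcomp[OF C.is_cat A.is_cat])
qed

lemma \<kappa>_iso: assumes Z: "Z \<in> cat_ob C" shows "is_iso A (fob js Z) (fob jl Z) (\<kappa> Z)"
proof -
  have jsZ: "fob js Z \<in> cat_ob A" using a3.Lob[OF Z] .
  have \<kappa>h: "\<kappa> Z \<in> cat_hom A (fob js Z) (fob jl Z)" using nat_transD(3)[OF \<kappa>_nat_trans Z] .
  have e1: "is_iso B (fob iu (fob js Z)) (fob iu (fob jl Z)) (farr iu (\<kappa> Z))"
    using B.iso_between_zero_obs[OF iu_js_zero[OF Z] iu_jl_zero[OF Z] a1.Lhom[OF \<kappa>h]] .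
  have "is_iso C (fob ju (fob js Z)) (fob ju (fob jl Z))
     (cat_comp C (farr ju (farr jl (C.inv_arr Z (fob ju (fob js Z)) (\<eta>j Z)))) (farr ju (\<mu> (fob js Z))))"
    using C.iso_comp[OF ju_mu_iso[OF jsZ]
        functor_iso[OF A.is_cat a4.L functor_iso[OF C.is_cat a4.R C.inv_arr(1)[OF etaj_iso[OF Z]]]]] .
  then have e2: "is_iso C (fob ju (fob js Z)) (fob ju (fob jl Z)) (farr ju (\<kappa> Z))"
    unfolding \<kappa>_def using a4.Lcomp[OF a4.eta_hom[OF jsZ] a4.Rhom[OF C.inv_arr(4)[OF etaj_iso[OF Z]]]] by simp
  show ?thesis
    using ff_reflects_iso[OF iu_ju_fully_faithful A.is_cat is_category_prod_cat[OF B.is_cat C.is_cat] \<kappa>h]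
      iso_prod_cat[OF e1 e2] by simp
qed

lemma js_jl_nat_isomorphic: "nat_isomorphic C A js jl"
  unfolding nat_isomorphic_def using nat_isoI[OF \<kappa>_nat_trans \<kappa>_iso] by blast

lemma iu_ish_nat_isomorphic: "nat_isomorphic A B iu ish"
  unfolding nat_isomorphic_def using nat_iso_sym[OF A.is_cat B.is_cat \<theta>_nat_iso] by blast

end

theorem theorem1p1:
  fixes \<A> :: "('oa,'aa) category" and \<B> :: "('ob,'ab) category" and \<C> :: "('oc,'ac) category"
    and i_up_star :: "('oa,'aa,'ob,'ab) cfunctor" and i_low_star :: "('ob,'ab,'oa,'aa) cfunctor"
    and i_up_shriek :: "('oa,'aa,'ob,'ab) cfunctor"
    and j_low_shriek :: "('oc,'ac,'oa,'aa) cfunctor" and j_up_star :: "('oa,'aa,'oc,'ac) cfunctor"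
    and j_low_star :: "('oc,'ac,'oa,'aa) cfunctor"
  assumes "abelian \<A>" and "abelian \<B>" and "abelian \<C>"
    and "recollement \<B> \<A> \<C> i_up_star i_low_star i_up_shriek j_low_shriek j_up_star j_low_star"
    and "exact_functor \<A> \<B> i_up_star" and "exact_functor \<A> \<B> i_up_shriek"
  shows "nat_isomorphic \<A> \<B> i_up_star i_up_shriek \<and>
         nat_isomorphic \<C> \<A> j_low_shriek j_low_star \<and>
         equivalent_cat \<A> (prod_cat \<B> \<C>)"
proof -
  note rec = assms(4)[unfolded recollement_def]
  have abA: "abcat \<A>" and abB: "abcat \<B>" and abC: "abcat \<C>" using abcatI assms(1-3) by blast+
  have cA: "is_category \<A>" and cB: "is_category \<B>" and cC: "is_category \<C>"
    using assms(1-3) unfolding abelian_def by blast+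
  obtain \<eta>i \<epsilon>i where a1: "adj \<A> \<B> i_up_star i_low_star \<eta>i \<epsilon>i"
    using adj_if_adjoint[OF _ cA cB] rec by blast
  obtain ui \<alpha> where a2: "adj \<B> \<A> i_low_star i_up_shriek ui \<alpha>"
    using adj_if_adjoint[OF _ cB cA] rec by blast
  obtain \<eta>j \<epsilon>j where a3: "adj \<C> \<A> j_low_shriek j_up_star \<eta>j \<epsilon>j"
    using adj_if_adjoint[OF _ cC cA] rec by blast
  obtain \<mu> \<nu> where a4: "adj \<A> \<C> j_up_star j_low_star \<mu> \<nu>"
    using adj_if_adjoint[OF _ cA cC] rec by blast
  interpret exact_recollement \<A> \<B> \<C> i_up_star i_low_star i_up_shriek j_low_shriek j_up_star j_low_star
    \<eta>i \<epsilon>i ui \<alpha> \<eta>j \<epsilon>j \<mu> \<nu>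
    unfolding exact_recollement_def exact_recollement_axioms_def adj_ab_def
    using abA abB abC a1 a2 a3 a4 rec assms(5,6) by blast
  show ?thesis using iu_ish_nat_isomorphic js_jl_nat_isomorphic equivalent_prod_cat by blast
qed

end
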